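(* In a phase space $Z_2$, the permanent source produced time harmonic perturbation propagation problem is well posed on every finite interval of time $[0,t_0]$, and the null solution is unstable (in the sense of Lyapunov) with respect to the class $Z_2$ of amplitudes.
   Context: Fix constants $U_0,c_0,\rho_0>0$, $\omega_f\in\mathbb{R}$, $h$ the Heaviside function. The permanent source produced time harmonic perturbation propagation problem with amplitude $A=(F,G,H,P)$: find $(v_x',v_y',v_z',p')$, zero for $t\le0$, with $\partial_t v_x' + U_0\partial_x v_x' + \frac1{\rho_0}\partial_x p' = h(t)F\sin\omega_f t$, $\partial_t v_y' + U_0\partial_x v_y' + \frac1{\rho_0}\partial_y p' = h(t)G\sin\omega_f t$, $\partial_t v_z' + U_0\partial_x v_z' + \frac1{\rho_0}\partial_z p' = h(t)H\sin\omega_f t$, $\partial_t p' + U_0\partial_xp' + \rho_0c_0^2(\partial_xv_x'+\partial_yv_y'+\partial_zv_z') = h(t)P\sin\omega_f t$. Phase space $Z_2$: fix real constants $k_i,l_i,m_i$ ($i=1,\dots,4$) with $k_1k_2k_3k_4\neq0$ and $\Delta = \frac{c_0\rho_0}{k_3k_4}[r_1(k_2k_3k_4+k_3m_2m_4+k_4l_2l_3) + r_2(k_1k_3k_4+k_3m_1m_4+k_4l_1l_3)]\neq0$, $r_i=\sqrt{k_i^2+l_i^2+m_i^2}$. With $\xi_i=k_ix+l_iy+m_iz$, $Z_2$ is the set of systems $(F,G,H,P)$ of bounded $C^1$ functions on $\mathbb{R}^3$ of the form $F = k_1f_1(\xi_1)+k_2f_2(\xi_2)+\frac{l_3}{k_3}f_3(\xi_3)+\frac{m_4}{k_4}f_4(\xi_4)$,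 $G = l_1f_1(\xi_1)+l_2f_2(\xi_2)-f_3(\xi_3)$, $H = m_1f_1(\xi_1)+m_2f_2(\xi_2)-f_4(\xi_4)$, $P = -c_0\rho_0r_1f_1(\xi_1)+c_0\rho_0r_2f_2(\xi_2)$ with $f_i$ continuously differentiable, normed by $\|A\|_{Z_2}=\max\{\sup|F|,\sup|G|,\sup|H|,\sup|P|\}$. Well-posedness on $[0,t_0]$: (a) for every $A\in Z_2$ there is a unique solution defined for $t\in[0,t_0]$; (b) if $A_n\to A$ in $Z_2$ then the corresponding solutions converge in $Z_2$ to the solution for $A$ at every $t\in[0,t_0]$. The null solution is stable if the problem is well posed on $[0,t_0]$ for every $t_0>0$ and for every $\varepsilon>0$ there is $\eta>0$ such that $\|A\|_{Z_2}<\eta$ implies that the solution has $Z_2$-norm $<\varepsilon$ for all $t\ge0$; unstable means not stable. *)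

theory Defs
  imports "HOL-Analysis.Analysis"
begin

text \<open>Scalar fields on R^3 (curried in x y z) and amplitude / state systems (F,G,H,P),
  resp. (v_x', v_y', v_z', p').  The constants k_i, l_i, m_i (i = 1..4) are given as
  functions k l m :: nat => real, only the values at 1..4 being used.\<close>

type_synonym field3 = "real \<Rightarrow> real \<Rightarrow> real \<Rightarrow> real"
type_synonym amp = "field3 \<times> field3 \<times> field3 \<times> field3"

definition cmp :: "amp \<Rightarrow> nat \<Rightarrow> field3" where
  "cmp A j = (if j = 0 then fst A else if j = 1 then fst (snd A)
              else if j = 2 then fst (snd (snd A)) else snd (snd (snd A)))"

definition rr :: "(nat \<Rightarrow> real) \<Rightarrow> (nat \<Rightarrow> real) \<Rightarrow> (nat \<Rightarrow> real) \<Rightarrow> nat \<Rightarrow> real" where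
  "rr k l m i = sqrt ((k i)\<^sup>2 + (l i)\<^sup>2 + (m i)\<^sup>2)"

definition Delta :: "real \<Rightarrow> real \<Rightarrow> (nat \<Rightarrow> real) \<Rightarrow> (nat \<Rightarrow> real) \<Rightarrow> (nat \<Rightarrow> real) \<Rightarrow> real" where
  "Delta c0 rho0 k l m = c0 * rho0 / (k 3 * k 4) *
     (rr k l m 1 * (k 2 * k 3 * k 4 + k 3 * m 2 * m 4 + k 4 * l 2 * l 3)
    + rr k l m 2 * (k 1 * k 3 * k 4 + k 3 * m 1 * m 4 + k 4 * l 1 * l 3))"

definition xi :: "(nat \<Rightarrow> real) \<Rightarrow> (nat \<Rightarrow> real) \<Rightarrow> (nat \<Rightarrow> real) \<Rightarrow> nat \<Rightarrow> field3" where
  "xi k l m i x y z = k i * x + l i * y + m i * z"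

definition bounded3 :: "field3 \<Rightarrow> bool" where
  "bounded3 g \<longleftrightarrow> (\<exists>B. \<forall>x y z. \<bar>g x y z\<bar> \<le> B)"

definition inZ2 :: "real \<Rightarrow> real \<Rightarrow> (nat \<Rightarrow> real) \<Rightarrow> (nat \<Rightarrow> real) \<Rightarrow> (nat \<Rightarrow> real) \<Rightarrow> amp \<Rightarrow> bool" where
  "inZ2 c0 rho0 k l m A \<longleftrightarrow>
     (\<exists>f :: nat \<Rightarrow> real \<Rightarrow> real.
        (\<forall>i\<in>{1..4}. f i C1_differentiable_on UNIV) \<and>
        A = ((\<lambda>x y z. k 1 * f 1 (xi k l m 1 x y z) + k 2 * f 2 (xi k l m 2 x y z)
                      + l 3 / k 3 * f 3 (xi k l m 3 x y z) + m 4 / k 4 * f 4 (xi k l m 4 x y z)),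
             (\<lambda>x y z. l 1 * f 1 (xi k l m 1 x y z) + l 2 * f 2 (xi k l m 2 x y z)
                      - f 3 (xi k l m 3 x y z)),
             (\<lambda>x y z. m 1 * f 1 (xi k l m 1 x y z) + m 2 * f 2 (xi k l m 2 x y z)
                      - f 4 (xi k l m 4 x y z)),
             (\<lambda>x y z. - c0 * rho0 * rr k l m 1 * f 1 (xi k l m 1 x y z)
                      + c0 * rho0 * rr k l m 2 * f 2 (xi k l m 2 x y z)))) \<and>
     (\<forall>j<4. bounded3 (cmp A j))"

definition supn :: "field3 \<Rightarrow> real" where
  "supn g = Sup {\<bar>g x y z\<bar> | x y z. True}"

definition z2norm :: "amp \<Rightarrow> real" where
  "z2norm A = max (max (supn (cmp A 0)) (supn (cmp A 1))) (max (supn (cmp A 2)) (supn (cmp A 3)))"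

definition amp_minus :: "amp \<Rightarrow> amp \<Rightarrow> amp" where
  "amp_minus A B = ((\<lambda>x y z. cmp A 0 x y z - cmp B 0 x y z), (\<lambda>x y z. cmp A 1 x y z - cmp B 1 x y z),
                    (\<lambda>x y z. cmp A 2 x y z - cmp B 2 x y z), (\<lambda>x y z. cmp A 3 x y z - cmp B 3 x y z))"

definition amp_zero :: amp where
  "amp_zero = ((\<lambda>x y z. 0), (\<lambda>x y z. 0), (\<lambda>x y z. 0), (\<lambda>x y z. 0))"

definition dT :: "(real \<Rightarrow> amp) \<Rightarrow> nat \<Rightarrow> real \<Rightarrow> field3" where
  "dT u j t x y z = deriv (\<lambda>s. cmp (u s) j x y z) t"
definition dX :: "(real \<Rightarrow> amp) \<Rightarrow> nat \<Rightarrow> real \<Rightarrow> field3" where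
  "dX u j t x y z = deriv (\<lambda>s. cmp (u t) j s y z) x"
definition dY :: "(real \<Rightarrow> amp) \<Rightarrow> nat \<Rightarrow> real \<Rightarrow> field3" where
  "dY u j t x y z = deriv (\<lambda>s. cmp (u t) j x s z) y"
definition dZ :: "(real \<Rightarrow> amp) \<Rightarrow> nat \<Rightarrow> real \<Rightarrow> field3" where
  "dZ u j t x y z = deriv (\<lambda>s. cmp (u t) j x y s) z"

definition uncurry4 :: "(real \<Rightarrow> field3) \<Rightarrow> real \<times> real \<times> real \<times> real \<Rightarrow> real" where
  "uncurry4 w p = w (fst p) (fst (snd p)) (fst (snd (snd p))) (snd (snd (snd p)))"

text \<open>Classical (C^1) solution on [0,t0] of the problem with amplitude A, vanishing for t <= 0,
  whose state lies in Z_2 at every time t in [0,t0].  The Heaviside factor h(t) equals 1 for t > 0.\<close>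
definition is_solution ::
  "real \<Rightarrow> real \<Rightarrow> real \<Rightarrow> real \<Rightarrow> (nat \<Rightarrow> real) \<Rightarrow> (nat \<Rightarrow> real) \<Rightarrow> (nat \<Rightarrow> real)
   \<Rightarrow> real \<Rightarrow> amp \<Rightarrow> (real \<Rightarrow> amp) \<Rightarrow> bool" where
  "is_solution U0 c0 rho0 \<omega> k l m t0 A u \<longleftrightarrow>
     (\<forall>t\<le>0. u t = amp_zero) \<and>
     (\<forall>t\<in>{0..t0}. inZ2 c0 rho0 k l m (u t)) \<and>
     (\<forall>j<4.
        continuous_on ({..t0} \<times> UNIV) (uncurry4 (\<lambda>t. cmp (u t) j)) \<and>
        (\<forall>t\<in>{0<..<t0}. \<forall>x y z.
            (\<lambda>s. cmp (u s) j x y z) differentiable (at t) \<and>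
            (\<lambda>s. cmp (u t) j s y z) differentiable (at x) \<and>
            (\<lambda>s. cmp (u t) j x s z) differentiable (at y) \<and>
            (\<lambda>s. cmp (u t) j x y s) differentiable (at z)) \<and>
        continuous_on ({0<..<t0} \<times> UNIV) (uncurry4 (dT u j)) \<and>
        continuous_on ({0<..<t0} \<times> UNIV) (uncurry4 (dX u j)) \<and>
        continuous_on ({0<..<t0} \<times> UNIV) (uncurry4 (dY u j)) \<and>
        continuous_on ({0<..<t0} \<times> UNIV) (uncurry4 (dZ u j))) \<and>
     (\<forall>t\<in>{0<..<t0}. \<forall>x y z.
        dT u 0 t x y z + U0 * dX u 0 t x y z + 1 / rho0 * dX u 3 t x y z
          = cmp A 0 x y z * sin (\<omega> * t) \<and>
        dT u 1 t x y z + U0 * dX u 1 t x y z + 1 / rho0 * dY u 3 t x y z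
          = cmp A 1 x y z * sin (\<omega> * t) \<and>
        dT u 2 t x y z + U0 * dX u 2 t x y z + 1 / rho0 * dZ u 3 t x y z
          = cmp A 2 x y z * sin (\<omega> * t) \<and>
        dT u 3 t x y z + U0 * dX u 3 t x y z
          + rho0 * c0\<^sup>2 * (dX u 0 t x y z + dY u 1 t x y z + dZ u 2 t x y z)
          = cmp A 3 x y z * sin (\<omega> * t))"

definition well_posed ::
  "real \<Rightarrow> real \<Rightarrow> real \<Rightarrow> real \<Rightarrow> (nat \<Rightarrow> real) \<Rightarrow> (nat \<Rightarrow> real) \<Rightarrow> (nat \<Rightarrow> real) \<Rightarrow> real \<Rightarrow> bool" where
  "well_posed U0 c0 rho0 \<omega> k l m t0 \<longleftrightarrow>
     (\<forall>A. inZ2 c0 rho0 k l m A \<longrightarrow>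
        (\<exists>u. is_solution U0 c0 rho0 \<omega> k l m t0 A u) \<and>
        (\<forall>u v. is_solution U0 c0 rho0 \<omega> k l m t0 A u \<longrightarrow> is_solution U0 c0 rho0 \<omega> k l m t0 A v
               \<longrightarrow> (\<forall>t\<le>t0. u t = v t))) \<and>
     (\<forall>As A us u. (\<forall>n. inZ2 c0 rho0 k l m (As n)) \<longrightarrow> inZ2 c0 rho0 k l m A \<longrightarrow>
        (\<lambda>n. z2norm (amp_minus (As n) A)) \<longlonglongrightarrow> 0 \<longrightarrow>
        (\<forall>n. is_solution U0 c0 rho0 \<omega> k l m t0 (As n) (us n)) \<longrightarrow>
        is_solution U0 c0 rho0 \<omega> k l m t0 A u \<longrightarrow>
        (\<forall>t\<in>{0..t0}. (\<lambda>n. z2norm (amp_minus (us n t) (u t))) \<longlonglongrightarrow> 0))"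

definition null_stable ::
  "real \<Rightarrow> real \<Rightarrow> real \<Rightarrow> real \<Rightarrow> (nat \<Rightarrow> real) \<Rightarrow> (nat \<Rightarrow> real) \<Rightarrow> (nat \<Rightarrow> real) \<Rightarrow> bool" where
  "null_stable U0 c0 rho0 \<omega> k l m \<longleftrightarrow>
     (\<forall>t0>0. well_posed U0 c0 rho0 \<omega> k l m t0) \<and>
     (\<forall>\<epsilon>>0. \<exists>\<eta>>0. \<forall>A. inZ2 c0 rho0 k l m A \<longrightarrow> z2norm A < \<eta> \<longrightarrow>
        (\<forall>t0>0. \<forall>u. is_solution U0 c0 rho0 \<omega> k l m t0 A u \<longrightarrow>
           (\<forall>t\<in>{0..t0}. z2norm (u t) < \<epsilon>)))"

end

theory Submission
  imports Defs
begin

(* The amplitudes in Z_2 are superpositions sum_i f_i(xi_i) e_i of plane waves with four constant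
   vectors e_i, which are linearly independent because Delta <> 0.  A plane wave along xi_i is an
   eigenfunction of the spatial part of the operator with eigenvalue c_i, so the system decouples
   into the scalar transport equations  g_t + c_i g_s = f_i(s) sin (omega t),  g(0) = 0.  These are
   solved by Duhamel's formula, and the mean value theorem along the characteristics gives
   |g(t, s)| <= t sup |f_i|: this yields existence, uniqueness and Lipschitz dependence on the
   amplitude on every [0, t0].  Instability is resonance: for f_3(s) = a sin (omega s / c_3) the
   third coefficient of the state at s = c_3 t equals a (t/2 - sin (2 omega t) / (4 omega)), which is
   unbounded however small a is, whereas it is bounded by a constant times the Z_2 norm of the
   state. *)

section \<open>Transport equations with a time-harmonic source\<close>

lemma has_derivative_of_continuous_partial_t:
  fixes h Ht Hs :: "real \<Rightarrow> real \<Rightarrow> real"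
  assumes T: "open T" "convex T" "\<tau> \<in> T"
    and dt: "\<And>\<tau> s. \<tau> \<in> T \<Longrightarrow> ((\<lambda>\<tau>. h \<tau> s) has_real_derivative Ht \<tau> s) (at \<tau>)"
    and ds: "((\<lambda>s. h \<tau> s) has_real_derivative Hs \<tau> \<sigma>) (at \<sigma>)"
    and ct: "continuous_on (T \<times> UNIV) (\<lambda>p. Ht (fst p) (snd p))"
  shows "((\<lambda>(s, \<tau>). h \<tau> s) has_derivative (\<lambda>(ds, d\<tau>). Hs \<tau> \<sigma> * ds + Ht \<tau> \<sigma> * d\<tau>)) (at (\<sigma>, \<tau>))"
proof -
  have "continuous_on (UNIV \<times> T) (\<lambda>(s, \<tau>). blinfun_mult_right (Ht \<tau> s))"
  proof -
    have "continuous_on (UNIV \<times> T) ((\<lambda>p. Ht (fst p) (snd p)) \<circ> prod.swap)"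
      by (rule continuous_on_compose) (auto intro!: continuous_intros continuous_on_subset[OF ct])
    then have "continuous_on (UNIV \<times> T) (blinfun_mult_right \<circ> ((\<lambda>p. Ht (fst p) (snd p)) \<circ> prod.swap))"
      by (rule continuous_on_compose) (intro linear_continuous_on bounded_linear_blinfun_mult_right)
    then show ?thesis by (simp add: o_def case_prod_unfold)
  qed
  then have "((\<lambda>(s, \<tau>). h \<tau> s) has_derivative (\<lambda>(ds, d\<tau>). Hs \<tau> \<sigma> * ds + blinfun_mult_right (Ht \<tau> \<sigma>) d\<tau>))
      (at (\<sigma>, \<tau>) within UNIV \<times> T)"
    using ds dt T
    by (intro has_derivative_partialsI)
      (auto simp: has_field_derivative_def continuous_on_eq_continuous_within intro: has_derivative_at_withinI)
  moreover have "at (\<sigma>, \<tau>) within UNIV \<times> T = at (\<sigma>, \<tau>)"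
    using T by (intro at_within_open) (auto intro: open_Times)
  ultimately show ?thesis by (simp add: case_prod_unfold)
qed

text \<open>Mean value theorem along the characteristic \<open>\<sigma> = s - c (t - \<tau>)\<close> through \<open>(t, s)\<close>.\<close>
lemma transport_bound:
  fixes h Ht Hs :: "real \<Rightarrow> real \<Rightarrow> real"
  assumes t: "0 \<le> t" "t \<le> T"
    and cont: "continuous_on ({0..T} \<times> UNIV) (\<lambda>p. h (fst p) (snd p))"
    and h0: "\<And>s. h 0 s = 0"
    and dt: "\<And>\<tau> s. 0 < \<tau> \<Longrightarrow> \<tau> < T \<Longrightarrow> ((\<lambda>\<tau>. h \<tau> s) has_real_derivative Ht \<tau> s) (at \<tau>)"
    and ds: "\<And>\<tau> s. 0 < \<tau> \<Longrightarrow> \<tau> < T \<Longrightarrow> ((\<lambda>s. h \<tau> s) has_real_derivative Hs \<tau> s) (at s)"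
    and ct: "continuous_on ({0<..<T} \<times> UNIV) (\<lambda>p. Ht (fst p) (snd p))"
    and bound: "\<And>\<tau> s. 0 < \<tau> \<Longrightarrow> \<tau> < T \<Longrightarrow> \<bar>Ht \<tau> s + c * Hs \<tau> s\<bar> \<le> B"
  shows "\<bar>h t s\<bar> \<le> B * t"
proof (cases "t = 0")
  case True
  then show ?thesis by (simp add: h0)
next
  case False
  with t have "0 < t" by simp
  define \<sigma> where "\<sigma> \<tau> = s - c * (t - \<tau>)" for \<tau>
  define \<psi> where "\<psi> \<tau> = h \<tau> (\<sigma> \<tau>)" for \<tau>
  have deriv_\<psi>: "(\<psi> has_derivative (\<lambda>d. (Hs \<tau> (\<sigma> \<tau>) * c + Ht \<tau> (\<sigma> \<tau>)) * d)) (at \<tau>)"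
    if "0 < \<tau>" "\<tau> < t" for \<tau>
  proof -
    have jd: "((\<lambda>(s, \<tau>). h \<tau> s) has_derivative (\<lambda>(ds, d\<tau>). Hs \<tau> (\<sigma> \<tau>) * ds + Ht \<tau> (\<sigma> \<tau>) * d\<tau>)) (at (\<sigma> \<tau>, \<tau>))"
      by (rule has_derivative_of_continuous_partial_t[of "{0<..<T}"]) (use that t dt ds ct in auto)
    have "((\<lambda>\<tau>. (\<sigma> \<tau>, \<tau>)) has_derivative (\<lambda>d. (c * d, d))) (at \<tau>)"
      unfolding \<sigma>_def by (auto intro!: derivative_eq_intros)
    from has_derivative_compose[OF this jd] have "((\<lambda>\<tau>. (\<lambda>(s, \<tau>). h \<tau> s) (\<sigma> \<tau>, \<tau>)) has_derivative
        (\<lambda>d. (\<lambda>(ds, d\<tau>). Hs \<tau> (\<sigma> \<tau>) * ds + Ht \<tau> (\<sigma> \<tau>) * d\<tau>) (c * d, d))) (at \<tau>)"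
      .
    then show ?thesis
      unfolding \<psi>_def by (simp add: algebra_simps)
  qed
  have cont_\<psi>: "continuous_on {0..t} \<psi>"
  proof -
    have "continuous_on {0..t} (\<lambda>\<tau>. (\<tau>, \<sigma> \<tau>))"
      unfolding \<sigma>_def by (intro continuous_intros)
    moreover have "(\<lambda>\<tau>. (\<tau>, \<sigma> \<tau>)) ` {0..t} \<subseteq> {0..T} \<times> UNIV"
      using t by auto
    ultimately have "continuous_on {0..t} (\<lambda>\<tau>. h (fst (\<tau>, \<sigma> \<tau>)) (snd (\<tau>, \<sigma> \<tau>)))"
      by (rule continuous_on_compose2[OF cont])
    then show ?thesis by (simp add: \<psi>_def)
  qed
  obtain \<tau> where \<tau>: "\<tau> \<in> {0<..<t}"
    and mvt: "norm (\<psi> t - \<psi> 0) \<le> norm ((Hs \<tau> (\<sigma> \<tau>) * c + Ht \<tau> (\<sigma> \<tau>)) * (t - 0))"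
    using mvt_general[OF \<open>0 < t\<close> cont_\<psi> deriv_\<psi>] by blast
  have "\<bar>Hs \<tau> (\<sigma> \<tau>) * c + Ht \<tau> (\<sigma> \<tau>)\<bar> \<le> B"
    using bound[of \<tau> "\<sigma> \<tau>"] \<tau> t by (simp add: add.commute mult.commute)
  then have "\<bar>(Hs \<tau> (\<sigma> \<tau>) * c + Ht \<tau> (\<sigma> \<tau>)) * t\<bar> \<le> B * t"
    using \<open>0 < t\<close> by (simp add: abs_mult mult_right_mono)
  moreover have "\<psi> t = h t s" "\<psi> 0 = 0"
    by (simp_all add: \<psi>_def \<sigma>_def h0)
  ultimately show ?thesis using mvt by simp
qed

lemma abs_mult_sin_le: "\<bar>x\<bar> \<le> B \<Longrightarrow> \<bar>x * sin y\<bar> \<le> (B::real)"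
  by (simp add: abs_mult) (meson abs_sin_le_one abs_ge_zero mult_left_le order_trans)

lemma continuous_has_antiderivative:
  fixes g :: "real \<Rightarrow> real"
  assumes "continuous_on UNIV g"
  shows "\<exists>P. \<forall>x. (P has_real_derivative g x) (at x)"
proof -
  have "((\<lambda>u. interval_lebesgue_integral lborel (ereal 0) (ereal u) g) has_real_derivative g x) (at x)" for x
  proof -
    have "((\<lambda>u. interval_lebesgue_integral lborel (ereal 0) (ereal u) g) has_vector_derivative g x)
        (at x within {min 0 x - 1..max 0 x + 1})"
      by (rule interval_integral_FTC2[where a="min 0 x - 1" and b="max 0 x + 1" and c=0])
        (auto intro: continuous_on_subset[OF assms])
    moreover have "at x within {min 0 x - 1..max 0 x + 1} = at x"
      by (rule at_within_Icc_at) auto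
    ultimately show ?thesis by (simp add: has_real_derivative_iff_has_vector_derivative)
  qed
  then show ?thesis by blast
qed

definition antiderivative :: "(real \<Rightarrow> real) \<Rightarrow> real \<Rightarrow> real" where
  "antiderivative g = (SOME P. \<forall>x. (P has_real_derivative g x) (at x))"

lemma antiderivative_has_real_derivative:
  "continuous_on UNIV g \<Longrightarrow> (antiderivative g has_real_derivative g x) (at x)"
  unfolding antiderivative_def using someI_ex[OF continuous_has_antiderivative] by blast

lemma continuous_on_antiderivative:
  "continuous_on UNIV g \<Longrightarrow> continuous_on UNIV (antiderivative g)"
  by (meson DERIV_isCont antiderivative_has_real_derivative continuous_at_imp_continuous_on)

lemma C1_differentiable_on_UNIV_deriv:
  assumes "f C1_differentiable_on UNIV"
  shows "(f has_real_derivative deriv f x) (at x)" and "continuous_on UNIV (deriv f)"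
proof -
  obtain D where D: "\<And>x. (f has_real_derivative D x) (at x)" and "continuous_on UNIV D"
    using assms unfolding C1_differentiable_on_def has_real_derivative_iff_has_vector_derivative by blast
  moreover have "deriv f = D"
    using D by (auto intro: DERIV_imp_deriv)
  ultimately show "(f has_real_derivative deriv f x) (at x)" and "continuous_on UNIV (deriv f)"
    by simp_all
qed

text \<open>For \<open>c \<noteq> 0\<close> this is Duhamel's formula \<open>\<integral>\<^sub>0\<^sup>t q (s - c (t - \<tau>)) sin (\<omega> \<tau>) d\<tau>\<close>
  after the substitution \<open>x = s - c (t - \<tau>)\<close>; it solves \<open>G\<^sub>t + c G\<^sub>s = q s sin (\<omega> t)\<close>, \<open>G 0 = 0\<close>.\<close>
definition forced_transport :: "real \<Rightarrow> real \<Rightarrow> (real \<Rightarrow> real) \<Rightarrow> real \<Rightarrow> real \<Rightarrow> real" where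
  "forced_transport \<omega> c q t s = (if c = 0 then q s * (1 - cos (\<omega> * t)) / \<omega> else
     (sin (\<omega> * t - \<omega> * s / c) * (antiderivative (\<lambda>x. q x * cos (\<omega> * x / c)) s
                                 - antiderivative (\<lambda>x. q x * cos (\<omega> * x / c)) (s - c * t))
    + cos (\<omega> * t - \<omega> * s / c) * (antiderivative (\<lambda>x. q x * sin (\<omega> * x / c)) s
                                 - antiderivative (\<lambda>x. q x * sin (\<omega> * x / c)) (s - c * t))) / c)"

definition forced_transport_ds :: "real \<Rightarrow> real \<Rightarrow> (real \<Rightarrow> real) \<Rightarrow> real \<Rightarrow> real \<Rightarrow> real" where
  "forced_transport_ds \<omega> c q t s = (if c = 0 then deriv q s * (1 - cos (\<omega> * t)) / \<omega> else
     (- (\<omega> / c) * cos (\<omega> * t - \<omega> * s / c) * (antiderivative (\<lambda>x. q x * cos (\<omega> * x / c)) s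
                                              - antiderivative (\<lambda>x. q x * cos (\<omega> * x / c)) (s - c * t))
    + sin (\<omega> * t - \<omega> * s / c) * (q s * cos (\<omega> * s / c) - q (s - c * t) * cos (\<omega> * (s - c * t) / c))
    + (\<omega> / c) * sin (\<omega> * t - \<omega> * s / c) * (antiderivative (\<lambda>x. q x * sin (\<omega> * x / c)) s
                                           - antiderivative (\<lambda>x. q x * sin (\<omega> * x / c)) (s - c * t))
    + cos (\<omega> * t - \<omega> * s / c) * (q s * sin (\<omega> * s / c) - q (s - c * t) * sin (\<omega> * (s - c * t) / c))) / c)"

context
  fixes \<omega> c :: real and q :: "real \<Rightarrow> real"
  assumes \<omega>: "\<omega> \<noteq> 0" and q: "q C1_differentiable_on UNIV"
begin

private lemma q_continuous: "continuous_on UNIV q"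
  using q by (intro differentiable_imp_continuous_on C1_diff_imp_diff)

private lemma continuous_weights:
  "continuous_on UNIV (\<lambda>x. q x * cos (\<omega> * x / c))" "continuous_on UNIV (\<lambda>x. q x * sin (\<omega> * x / c))"
  by (simp_all only: divide_inverse) (intro continuous_intros q_continuous)+

private lemmas antiderivative_weights_chain =
  DERIV_chain2[OF antiderivative_has_real_derivative[OF continuous_weights(1)]]
  DERIV_chain2[OF antiderivative_has_real_derivative[OF continuous_weights(2)]]

lemma forced_transport_initial: "forced_transport \<omega> c q 0 s = 0"
  unfolding forced_transport_def by simp

lemma forced_transport_has_derivative_t:
  "((\<lambda>t. forced_transport \<omega> c q t s) has_real_derivative
     q s * sin (\<omega> * t) - c * forced_transport_ds \<omega> c q t s) (at t)"
proof (cases "c = 0")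
  case True
  then show ?thesis
    unfolding forced_transport_def forced_transport_ds_def using \<omega>
    by (auto intro!: derivative_eq_intros)
next
  case False
  have sin_split: "sin (\<omega> * t) = sin (\<omega> * t - \<omega> * s / c) * cos (\<omega> * s / c)
      + cos (\<omega> * t - \<omega> * s / c) * sin (\<omega> * s / c)"
    using sin_add[of "\<omega> * t - \<omega> * s / c" "\<omega> * s / c"] by simp
  show ?thesis
    unfolding forced_transport_def forced_transport_ds_def if_not_P[OF False]
    apply (rule derivative_eq_intros antiderivative_weights_chain refl | simp add: False)+
    apply (subst sin_split)
    using False by (simp add: field_simps)
qed

lemma forced_transport_has_derivative_s:
  "((\<lambda>s. forced_transport \<omega> c q t s) has_real_derivative forced_transport_ds \<omega> c q t s) (at s)"
proof (cases "c = 0")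
  case True
  then show ?thesis
    unfolding forced_transport_def forced_transport_ds_def using \<omega>
    by (auto intro!: derivative_eq_intros C1_differentiable_on_UNIV_deriv(1)[OF q])
next
  case False
  show ?thesis
    unfolding forced_transport_def forced_transport_ds_def if_not_P[OF False]
    apply (rule derivative_eq_intros antiderivative_weights_chain
        antiderivative_has_real_derivative[OF continuous_weights(1)]
        antiderivative_has_real_derivative[OF continuous_weights(2)] refl | simp add: False)+
    using False by (simp add: field_simps)
qed

private lemma continuous_on_compose_transport_data:
  assumes "continuous_on S g"
  shows "continuous_on S (\<lambda>x. q (g x))" "continuous_on S (\<lambda>x. deriv q (g x))"
    "continuous_on S (\<lambda>x. antiderivative (\<lambda>x. q x * cos (\<omega> * x / c)) (g x))"
    "continuous_on S (\<lambda>x. antiderivative (\<lambda>x. q x * sin (\<omega> * x / c)) (g x))"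
proof -
  show "continuous_on S (\<lambda>x. q (g x))"
    by (rule continuous_on_compose2[OF q_continuous assms]) simp
  show "continuous_on S (\<lambda>x. deriv q (g x))"
    by (rule continuous_on_compose2[OF C1_differentiable_on_UNIV_deriv(2)[OF q] assms]) simp
  show "continuous_on S (\<lambda>x. antiderivative (\<lambda>x. q x * cos (\<omega> * x / c)) (g x))"
    by (rule continuous_on_compose2[OF continuous_on_antiderivative[OF continuous_weights(1)] assms]) simp
  show "continuous_on S (\<lambda>x. antiderivative (\<lambda>x. q x * sin (\<omega> * x / c)) (g x))"
    by (rule continuous_on_compose2[OF continuous_on_antiderivative[OF continuous_weights(2)] assms]) simp
qed

lemma continuous_on_forced_transport:
  "continuous_on UNIV (\<lambda>p. forced_transport \<omega> c q (fst p) (snd p))"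
  unfolding forced_transport_def using \<omega>
  by (cases "c = 0") (auto intro!: continuous_intros continuous_on_compose_transport_data)

lemma continuous_on_forced_transport_ds:
  "continuous_on UNIV (\<lambda>p. forced_transport_ds \<omega> c q (fst p) (snd p))"
  unfolding forced_transport_ds_def using \<omega>
  by (cases "c = 0") (auto intro!: continuous_intros continuous_on_compose_transport_data)

lemma forced_transport_bound:
  assumes "\<And>s. \<bar>q s\<bar> \<le> B" and "0 \<le> t"
  shows "\<bar>forced_transport \<omega> c q t s\<bar> \<le> B * t"
proof (rule transport_bound[where T = "t + 1" and c = c and h = "forced_transport \<omega> c q"
      and Ht = "\<lambda>\<tau> s. q s * sin (\<omega> * \<tau>) - c * forced_transport_ds \<omega> c q \<tau> s"
      and Hs = "forced_transport_ds \<omega> c q"])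
  show "0 \<le> t" "t \<le> t + 1"
    using assms(2) by simp_all
  show "continuous_on ({0..t + 1} \<times> UNIV) (\<lambda>p. forced_transport \<omega> c q (fst p) (snd p))"
    using continuous_on_forced_transport by (rule continuous_on_subset) simp
  show "continuous_on ({0<..<t + 1} \<times> UNIV)
      (\<lambda>p. q (snd p) * sin (\<omega> * fst p) - c * forced_transport_ds \<omega> c q (fst p) (snd p))"
    using continuous_on_forced_transport_ds
    by (intro continuous_intros continuous_on_compose_transport_data) (auto elim: continuous_on_subset)
  show "\<bar>q s * sin (\<omega> * \<tau>) - c * forced_transport_ds \<omega> c q \<tau> s + c * forced_transport_ds \<omega> c q \<tau> s\<bar> \<le> B"
    for \<tau> s
    using abs_mult_sin_le[OF assms(1)] by simp
qed (rule forced_transport_initial forced_transport_has_derivative_t forced_transport_has_derivative_s)+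

end

section \<open>Amplitudes and the \<open>Z\<^sub>2\<close> norm\<close>

lemma less_4_cases: "(j::nat) < 4 \<longleftrightarrow> j = 0 \<or> j = 1 \<or> j = 2 \<or> j = 3"
  by auto

lemma amp_eqI:
  assumes "\<And>j. j < 4 \<Longrightarrow> cmp A j = cmp B j"
  shows "A = B"
  using assms[of 0] assms[of 1] assms[of 2] assms[of 3]
  by (cases A; cases B) (simp add: cmp_def)

lemma cmp_amp_zero: "cmp amp_zero j = (\<lambda>x y z. 0)"
  by (simp add: amp_zero_def cmp_def)

lemma cmp_amp_minus: "j < 4 \<Longrightarrow> cmp (amp_minus A B) j x y z = cmp A j x y z - cmp B j x y z"
  by (auto simp: amp_minus_def cmp_def)

lemma abs_le_supn: "bounded3 g \<Longrightarrow> \<bar>g x y z\<bar> \<le> supn g"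
  unfolding supn_def bounded3_def by (rule cSup_upper) (auto simp: bdd_above_def)

lemma supn_le: "(\<And>x y z. \<bar>g x y z\<bar> \<le> M) \<Longrightarrow> supn g \<le> M"
  unfolding supn_def by (rule cSup_least) auto

lemma supn_le_z2norm: "j < 4 \<Longrightarrow> supn (cmp A j) \<le> z2norm A"
  unfolding z2norm_def by (auto simp: less_Suc_eq numeral_eq_Suc)

lemma abs_cmp_le_z2norm: "bounded3 (cmp A j) \<Longrightarrow> j < 4 \<Longrightarrow> \<bar>cmp A j x y z\<bar> \<le> z2norm A"
  using abs_le_supn supn_le_z2norm order_trans by blast

lemma z2norm_nonneg: "bounded3 (cmp A 0) \<Longrightarrow> 0 \<le> z2norm A"
  using abs_cmp_le_z2norm[of A 0 0 0 0] by simp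

lemma z2norm_le: "(\<And>j x y z. j < 4 \<Longrightarrow> \<bar>cmp A j x y z\<bar> \<le> M) \<Longrightarrow> z2norm A \<le> M"
  unfolding z2norm_def by (simp add: supn_le)

lemma bounded3_diff: "bounded3 f \<Longrightarrow> bounded3 g \<Longrightarrow> bounded3 (\<lambda>x y z. f x y z - g x y z)"
  unfolding bounded3_def by (meson abs_triangle_ineq4 add_mono order_trans)

lemma sum_atLeast1_atMost4: "(\<Sum>i\<in>{1..4::nat}. f i) = f 1 + f 2 + f 3 + (f 4 :: real)"
  by (simp add: eval_nat_numeral atLeastAtMostSuc_conv)

lemma sum_lessThan4: "(\<Sum>j<4::nat. f j) = f 0 + f 1 + f 2 + (f 3 :: real)"
  by (simp add: eval_nat_numeral)

lemma abs_sum_le_bound: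
  fixes w a :: "nat \<Rightarrow> real"
  assumes "finite I" "\<And>j. j \<in> I \<Longrightarrow> \<bar>a j\<bar> \<le> M" "0 \<le> M"
  shows "\<bar>\<Sum>j\<in>I. w j * a j\<bar> \<le> (\<Sum>j\<in>I. \<bar>w j\<bar>) * M"
proof -
  have "\<bar>\<Sum>j\<in>I. w j * a j\<bar> \<le> (\<Sum>j\<in>I. \<bar>w j\<bar> * M)"
    using assms by (intro order_trans[OF sum_abs] sum_mono) (simp add: abs_mult mult_left_mono)
  then show ?thesis by (simp add: sum_distrib_right)
qed

lemma continuous_on_uncurry4_axis:
  assumes "continuous_on (S \<times> UNIV) (uncurry4 w)" and "T \<subseteq> S"
  shows "continuous_on (T \<times> UNIV) (\<lambda>p. w (fst p) (snd p / c) 0 0)"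
proof -
  have "continuous_on (T \<times> UNIV) (\<lambda>p. (fst p, snd p / c, 0::real, 0::real))"
    by (simp add: divide_inverse continuous_intros)
  from continuous_on_compose2[OF assms(1) this] assms(2)
  show ?thesis
    by (force simp: uncurry4_def)
qed

section \<open>Plane-wave modes\<close>

locale z2_problem =
  fixes U0 c0 rho0 \<omega> :: real and k l m :: "nat \<Rightarrow> real"
  assumes U0_pos: "U0 > 0" and rho0_pos: "rho0 > 0" and \<omega>_nonzero: "\<omega> \<noteq> 0"
    and k_prod_nonzero: "k 1 * k 2 * k 3 * k 4 \<noteq> 0" and Delta_nonzero: "Delta c0 rho0 k l m \<noteq> 0"
begin

abbreviation "r \<equiv> rr k l m"
abbreviation "\<xi> \<equiv> xi k l m"
abbreviation "\<Delta> \<equiv> Delta c0 rho0 k l m"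

lemma k_nonzero: "i \<in> {1..4} \<Longrightarrow> k i \<noteq> 0"
  using k_prod_nonzero by (auto simp: eval_nat_numeral atLeastAtMostSuc_conv)

lemma r_squared: "(r i)\<^sup>2 = (k i)\<^sup>2 + (l i)\<^sup>2 + (m i)\<^sup>2"
  unfolding rr_def by simp

text \<open>\<open>wave_vec i\<close> is the constant vector \<open>(F, G, H, P)\<close> carried by \<open>f\<^sub>i(\<xi>\<^sub>i)\<close> in the definition
  of \<open>Z\<^sub>2\<close>; components are indexed by \<open>j = 0..3\<close>.\<close>
definition wave_vec :: "nat \<Rightarrow> nat \<Rightarrow> real" where
  "wave_vec i j =
    (if i = 1 then (if j = 0 then k 1 else if j = 1 then l 1 else if j = 2 then m 1 else - c0 * rho0 * r 1)
     else if i = 2 then (if j = 0 then k 2 else if j = 1 then l 2 else if j = 2 then m 2 else c0 * rho0 * r 2)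
     else if i = 3 then (if j = 0 then l 3 / k 3 else if j = 1 then -1 else 0)
     else (if j = 0 then m 4 / k 4 else if j = 2 then -1 else 0))"

definition mode_sum :: "(nat \<Rightarrow> real) \<Rightarrow> nat \<Rightarrow> real" where
  "mode_sum d j = (\<Sum>i\<in>{1..4}. wave_vec i j * d i)"

definition speed :: "nat \<Rightarrow> real" where
  "speed i = (if i = 1 then U0 * k 1 - c0 * r 1 else if i = 2 then U0 * k 2 + c0 * r 2 else U0 * k i)"

text \<open>The functional \<open>a\<^sub>0 + (l\<^sub>3/k\<^sub>3) a\<^sub>1 + (m\<^sub>4/k\<^sub>4) a\<^sub>2\<close> annihilates \<open>wave_vec 3\<close> and \<open>wave_vec 4\<close>;
  on \<open>wave_vec i\<close> (\<open>i = 1, 2\<close>) it takes the value \<open>beta i\<close>.\<close>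
definition beta :: "nat \<Rightarrow> real" where
  "beta i = k i + l i * l 3 / k 3 + m i * m 4 / k 4"

lemma Delta_eq: "\<Delta> = c0 * rho0 * (beta 1 * r 2 + beta 2 * r 1)"
  unfolding Delta_def beta_def using k_nonzero[of 3] k_nonzero[of 4]
  by (simp add: field_simps)

text \<open>The rows of the inverse of the matrix with columns \<open>wave_vec i\<close>: the \<open>beta\<close>-functional and the
  last component give a \<open>2 \<times> 2\<close> system for \<open>d\<^sub>1, d\<^sub>2\<close> with determinant \<open>\<Delta>\<close>, and then \<open>d\<^sub>3, d\<^sub>4\<close> are
  read off from the components \<open>G, H\<close>.\<close>
definition dual_vec :: "nat \<Rightarrow> nat \<Rightarrow> real" where
  "dual_vec i j =
    (let w = (if j = 0 then 1 else if j = 1 then l 3 / k 3 else if j = 2 then m 4 / k 4 else 0);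
         d1 = (c0 * rho0 * r 2 * w - (if j = 3 then beta 2 else 0)) / \<Delta>;
         d2 = (c0 * rho0 * r 1 * w + (if j = 3 then beta 1 else 0)) / \<Delta>
     in if i = 1 then d1 else if i = 2 then d2
        else if i = 3 then l 1 * d1 + l 2 * d2 - (if j = 1 then 1 else 0)
        else m 1 * d1 + m 2 * d2 - (if j = 2 then 1 else 0))"

definition coord :: "nat \<Rightarrow> (nat \<Rightarrow> real) \<Rightarrow> real" where
  "coord i a = (\<Sum>j<4. dual_vec i j * a j)"

lemma coord_mode_sum:
  assumes "i \<in> {1..4}"
  shows "coord i (mode_sum d) = d i"
proof -
  have k34: "k 3 \<noteq> 0" "k 4 \<noteq> 0"
    using k_nonzero by auto
  have beta_part: "mode_sum d 0 + l 3 / k 3 * mode_sum d 1 + m 4 / k 4 * mode_sum d 2 = beta 1 * d 1 + beta 2 * d 2"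
    unfolding mode_sum_def sum_atLeast1_atMost4 wave_vec_def beta_def using k34
    by (simp add: field_simps)
  have P_part: "mode_sum d 3 = - c0 * rho0 * r 1 * d 1 + c0 * rho0 * r 2 * d 2"
    unfolding mode_sum_def sum_atLeast1_atMost4 wave_vec_def by simp
  have G_part: "mode_sum d 1 = l 1 * d 1 + l 2 * d 2 - d 3" and H_part: "mode_sum d 2 = m 1 * d 1 + m 2 * d 2 - d 4"
    unfolding mode_sum_def sum_atLeast1_atMost4 wave_vec_def by simp_all
  have coords: "coord 1 (mode_sum d) = (c0 * rho0 * r 2 * (beta 1 * d 1 + beta 2 * d 2)
      - beta 2 * (- c0 * rho0 * r 1 * d 1 + c0 * rho0 * r 2 * d 2)) / \<Delta>"
    "coord 2 (mode_sum d) = (c0 * rho0 * r 1 * (beta 1 * d 1 + beta 2 * d 2)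
      + beta 1 * (- c0 * rho0 * r 1 * d 1 + c0 * rho0 * r 2 * d 2)) / \<Delta>"
    unfolding beta_part[symmetric] P_part[symmetric] coord_def sum_lessThan4 dual_vec_def
    using k34 Delta_nonzero by (simp_all add: field_simps)
  have numerators: "c0 * rho0 * r 2 * (beta 1 * d 1 + beta 2 * d 2)
      - beta 2 * (- c0 * rho0 * r 1 * d 1 + c0 * rho0 * r 2 * d 2) = d 1 * \<Delta>"
    "c0 * rho0 * r 1 * (beta 1 * d 1 + beta 2 * d 2)
      + beta 1 * (- c0 * rho0 * r 1 * d 1 + c0 * rho0 * r 2 * d 2) = d 2 * \<Delta>"
    unfolding Delta_eq by (simp_all add: algebra_simps)
  have c1: "coord 1 (mode_sum d) = d 1" and c2: "coord 2 (mode_sum d) = d 2"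
    using Delta_nonzero unfolding coords numerators by simp_all
  have "coord 3 a = l 1 * coord 1 a + l 2 * coord 2 a - a 1"
    and "coord 4 a = m 1 * coord 1 a + m 2 * coord 2 a - a 2" for a
    unfolding coord_def sum_lessThan4 dual_vec_def by (simp_all add: Let_def algebra_simps)
  with assms c1 c2 G_part H_part show ?thesis
    by (auto simp: eval_nat_numeral atLeastAtMostSuc_conv)
qed

text \<open>A plane wave along \<open>\<xi>\<^sub>i\<close> is an eigenfunction of the spatial part of the operator with
  eigenvalue \<open>speed i\<close>; this decouples the system into four scalar transport equations.\<close>
lemma acoustic_operator_mode_sum:
  "U0 * mode_sum (\<lambda>i. k i * d i) 0 + 1 / rho0 * mode_sum (\<lambda>i. k i * d i) 3
     = mode_sum (\<lambda>i. speed i * d i) 0"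
  "U0 * mode_sum (\<lambda>i. k i * d i) 1 + 1 / rho0 * mode_sum (\<lambda>i. l i * d i) 3
     = mode_sum (\<lambda>i. speed i * d i) 1"
  "U0 * mode_sum (\<lambda>i. k i * d i) 2 + 1 / rho0 * mode_sum (\<lambda>i. m i * d i) 3
     = mode_sum (\<lambda>i. speed i * d i) 2"
  "U0 * mode_sum (\<lambda>i. k i * d i) 3
     + rho0 * c0\<^sup>2 * (mode_sum (\<lambda>i. k i * d i) 0 + mode_sum (\<lambda>i. l i * d i) 1 + mode_sum (\<lambda>i. m i * d i) 2)
     = mode_sum (\<lambda>i. speed i * d i) 3"
proof -
  have k34: "k 3 \<noteq> 0" "k 4 \<noteq> 0"
    using k_nonzero by auto
  note defs = mode_sum_def sum_atLeast1_atMost4 wave_vec_def speed_def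
  show "U0 * mode_sum (\<lambda>i. k i * d i) 0 + 1 / rho0 * mode_sum (\<lambda>i. k i * d i) 3
     = mode_sum (\<lambda>i. speed i * d i) 0"
    "U0 * mode_sum (\<lambda>i. k i * d i) 1 + 1 / rho0 * mode_sum (\<lambda>i. l i * d i) 3
     = mode_sum (\<lambda>i. speed i * d i) 1"
    "U0 * mode_sum (\<lambda>i. k i * d i) 2 + 1 / rho0 * mode_sum (\<lambda>i. m i * d i) 3
     = mode_sum (\<lambda>i. speed i * d i) 2"
    unfolding defs using k34 rho0_pos by (simp_all add: field_simps)
  have "mode_sum (\<lambda>i. k i * d i) 0 + mode_sum (\<lambda>i. l i * d i) 1 + mode_sum (\<lambda>i. m i * d i) 2
      = (r 1)\<^sup>2 * d 1 + (r 2)\<^sup>2 * d 2"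
    unfolding defs r_squared using k34 by (simp add: field_simps power2_eq_square)
  then show "U0 * mode_sum (\<lambda>i. k i * d i) 3
     + rho0 * c0\<^sup>2 * (mode_sum (\<lambda>i. k i * d i) 0 + mode_sum (\<lambda>i. l i * d i) 1 + mode_sum (\<lambda>i. m i * d i) 2)
     = mode_sum (\<lambda>i. speed i * d i) 3"
    unfolding defs by (simp add: algebra_simps power2_eq_square)
qed

lemma mode_sum_cong: "(\<And>i. i \<in> {1..4} \<Longrightarrow> d i = e i) \<Longrightarrow> mode_sum d j = mode_sum e j"
  unfolding mode_sum_def by simp

lemma mode_sum_diff: "mode_sum (\<lambda>i. d i - e i) j = mode_sum d j - mode_sum e j"
  unfolding mode_sum_def by (simp add: algebra_simps sum_subtractf)

lemma mode_sum_scale: "mode_sum (\<lambda>i. d i * c) j = mode_sum d j * c"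
  unfolding mode_sum_def by (simp add: sum_distrib_right mult.assoc)

lemma coord_cong: "(\<And>j. j < 4 \<Longrightarrow> a j = b j) \<Longrightarrow> coord i a = coord i b"
  unfolding coord_def by simp

lemma coord_diff: "coord i (\<lambda>j. a j - b j) = coord i a - coord i b"
  unfolding coord_def by (simp add: algebra_simps sum_subtractf)

lemma coord_scale: "coord i (\<lambda>j. a j * c) = coord i a * c"
  unfolding coord_def by (simp add: sum_distrib_right mult.assoc)

definition mode_bound :: real where
  "mode_bound = (\<Sum>j<4. \<Sum>i\<in>{1..4}. \<bar>wave_vec i j\<bar>)"

definition coord_bound :: real where
  "coord_bound = (\<Sum>i\<in>{1..4}. \<Sum>j<4. \<bar>dual_vec i j\<bar>)"

lemma mode_bound_nonneg: "0 \<le> mode_bound"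
  unfolding mode_bound_def by (intro sum_nonneg) auto

lemma coord_bound_nonneg: "0 \<le> coord_bound"
  unfolding coord_bound_def by (intro sum_nonneg) auto

lemma abs_coord_le:
  assumes "i \<in> {1..4}" and "\<And>j. j < 4 \<Longrightarrow> \<bar>a j\<bar> \<le> M"
  shows "\<bar>coord i a\<bar> \<le> coord_bound * M"
proof -
  have "0 \<le> M"
    using assms(2)[of 0] by simp
  then have "\<bar>coord i a\<bar> \<le> (\<Sum>j<4. \<bar>dual_vec i j\<bar>) * M"
    unfolding coord_def using assms(2) by (intro abs_sum_le_bound) auto
  also have "\<dots> \<le> coord_bound * M"
    unfolding coord_bound_def using assms(1) \<open>0 \<le> M\<close>
    by (intro mult_right_mono member_le_sum[where f = "\<lambda>i. \<Sum>j<4. \<bar>dual_vec i j\<bar>"]) auto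
  finally show ?thesis .
qed

lemma abs_mode_sum_le:
  assumes "j < 4" and "\<And>i. i \<in> {1..4} \<Longrightarrow> \<bar>d i\<bar> \<le> M"
  shows "\<bar>mode_sum d j\<bar> \<le> mode_bound * M"
proof -
  have "0 \<le> M"
    using assms(2)[of 1] by simp
  then have "\<bar>mode_sum d j\<bar> \<le> (\<Sum>i\<in>{1..4}. \<bar>wave_vec i j\<bar>) * M"
    unfolding mode_sum_def using assms(2) by (intro abs_sum_le_bound) auto
  also have "\<dots> \<le> mode_bound * M"
    unfolding mode_bound_def using assms(1) \<open>0 \<le> M\<close>
    by (intro mult_right_mono member_le_sum[where f = "\<lambda>j. \<Sum>i\<in>{1..4}. \<bar>wave_vec i j\<bar>"]) auto
  finally show ?thesis .
qed

definition plane_wave :: "(nat \<Rightarrow> real \<Rightarrow> real) \<Rightarrow> amp" where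
  "plane_wave f =
    ((\<lambda>x y z. mode_sum (\<lambda>i. f i (\<xi> i x y z)) 0), (\<lambda>x y z. mode_sum (\<lambda>i. f i (\<xi> i x y z)) 1),
     (\<lambda>x y z. mode_sum (\<lambda>i. f i (\<xi> i x y z)) 2), (\<lambda>x y z. mode_sum (\<lambda>i. f i (\<xi> i x y z)) 3))"

lemma cmp_plane_wave: "j < 4 \<Longrightarrow> cmp (plane_wave f) j x y z = mode_sum (\<lambda>i. f i (\<xi> i x y z)) j"
  by (auto simp: plane_wave_def cmp_def less_4_cases)

lemma plane_wave_cong:
  assumes "\<And>i. i \<in> {1..4} \<Longrightarrow> f i = g i"
  shows "plane_wave f = plane_wave g"
proof -
  have "mode_sum (\<lambda>i. f i (\<xi> i x y z)) j = mode_sum (\<lambda>i. g i (\<xi> i x y z)) j" for j x y z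
    using assms by (intro mode_sum_cong) simp
  then show ?thesis
    by (simp add: plane_wave_def)
qed

lemma plane_wave_zero: "plane_wave (\<lambda>i s. 0) = amp_zero"
  by (rule amp_eqI) (simp add: cmp_plane_wave cmp_amp_zero mode_sum_def fun_eq_iff)

lemma plane_wave_eq:
  "plane_wave f =
    ((\<lambda>x y z. k 1 * f 1 (\<xi> 1 x y z) + k 2 * f 2 (\<xi> 2 x y z)
              + l 3 / k 3 * f 3 (\<xi> 3 x y z) + m 4 / k 4 * f 4 (\<xi> 4 x y z)),
     (\<lambda>x y z. l 1 * f 1 (\<xi> 1 x y z) + l 2 * f 2 (\<xi> 2 x y z) - f 3 (\<xi> 3 x y z)),
     (\<lambda>x y z. m 1 * f 1 (\<xi> 1 x y z) + m 2 * f 2 (\<xi> 2 x y z) - f 4 (\<xi> 4 x y z)),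
     (\<lambda>x y z. - c0 * rho0 * r 1 * f 1 (\<xi> 1 x y z) + c0 * rho0 * r 2 * f 2 (\<xi> 2 x y z)))"
  unfolding plane_wave_def mode_sum_def sum_atLeast1_atMost4 wave_vec_def by simp

lemma inZ2_iff_plane_wave:
  "inZ2 c0 rho0 k l m A \<longleftrightarrow>
     (\<exists>f. (\<forall>i\<in>{1..4}. f i C1_differentiable_on UNIV) \<and> A = plane_wave f) \<and> (\<forall>j<4. bounded3 (cmp A j))"
  unfolding inZ2_def plane_wave_eq ..

lemma inZ2_bounded3: "inZ2 c0 rho0 k l m A \<Longrightarrow> j < 4 \<Longrightarrow> bounded3 (cmp A j)"
  unfolding inZ2_def by blast

lemma bounded3_plane_wave:
  assumes "\<And>i s. i \<in> {1..4} \<Longrightarrow> \<bar>f i s\<bar> \<le> M" and "j < 4"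
  shows "bounded3 (cmp (plane_wave f) j)"
  unfolding bounded3_def cmp_plane_wave[OF assms(2)]
  by (rule exI[of _ "mode_bound * M"]) (auto intro: abs_mode_sum_le[OF assms(2)] assms(1))

text \<open>On the \<open>x\<close>-axis \<open>\<xi>\<^sub>i = s\<close> at \<open>x = s / k\<^sub>i\<close>, so \<open>profile i\<close> recovers \<open>f\<^sub>i\<close> from a plane wave.\<close>
definition profile :: "nat \<Rightarrow> amp \<Rightarrow> real \<Rightarrow> real" where
  "profile i A s = coord i (\<lambda>j. cmp A j (s / k i) 0 0)"

lemma profile_plane_wave: "i \<in> {1..4} \<Longrightarrow> profile i (plane_wave f) s = f i s"
  unfolding profile_def
  by (simp add: coord_cong[OF cmp_plane_wave] coord_mode_sum xi_def k_nonzero)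

lemma plane_wave_profile:
  assumes "inZ2 c0 rho0 k l m A"
  shows "plane_wave (\<lambda>i. profile i A) = A"
proof -
  obtain f where "A = plane_wave f"
    using assms unfolding inZ2_iff_plane_wave by blast
  moreover have "plane_wave (\<lambda>i. profile i (plane_wave f)) = plane_wave f"
    by (rule plane_wave_cong) (simp add: profile_plane_wave fun_eq_iff)
  ultimately show ?thesis
    by simp
qed

lemma cmp_eq_mode_sum_profile:
  assumes "inZ2 c0 rho0 k l m A" and "j < 4"
  shows "cmp A j x y z = mode_sum (\<lambda>i. profile i A (\<xi> i x y z)) j"
  using cmp_plane_wave[OF assms(2), of "\<lambda>i. profile i A"] by (simp add: plane_wave_profile[OF assms(1)])

lemma inZ2_eqI:
  assumes "inZ2 c0 rho0 k l m A" and "inZ2 c0 rho0 k l m B" and "\<And>i. i \<in> {1..4} \<Longrightarrow> profile i A = profile i B"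
  shows "A = B"
proof -
  have "plane_wave (\<lambda>i. profile i A) = plane_wave (\<lambda>i. profile i B)"
    by (rule plane_wave_cong) (simp add: assms(3))
  then show ?thesis
    by (simp add: plane_wave_profile assms(1,2))
qed

lemma profile_amp_minus: "profile i (amp_minus A B) s = profile i A s - profile i B s"
  unfolding profile_def by (simp add: coord_cong[OF cmp_amp_minus] coord_diff)

lemma abs_profile_le_z2norm:
  assumes "\<And>j. j < 4 \<Longrightarrow> bounded3 (cmp A j)" and "i \<in> {1..4}"
  shows "\<bar>profile i A s\<bar> \<le> coord_bound * z2norm A"
  unfolding profile_def using assms by (intro abs_coord_le abs_cmp_le_z2norm)

lemma plane_wave_has_derivative:
  assumes "\<And>i x. i \<in> {1..4} \<Longrightarrow> (f i has_real_derivative Df i x) (at x)" and "j < 4"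
  shows "((\<lambda>x. cmp (plane_wave f) j x y z) has_real_derivative mode_sum (\<lambda>i. k i * Df i (\<xi> i x y z)) j) (at x)"
    and "((\<lambda>y. cmp (plane_wave f) j x y z) has_real_derivative mode_sum (\<lambda>i. l i * Df i (\<xi> i x y z)) j) (at y)"
    and "((\<lambda>z. cmp (plane_wave f) j x y z) has_real_derivative mode_sum (\<lambda>i. m i * Df i (\<xi> i x y z)) j) (at z)"
  unfolding cmp_plane_wave[OF assms(2)] mode_sum_def xi_def
  by (auto intro!: derivative_eq_intros DERIV_chain2[OF assms(1)] simp: algebra_simps)

section \<open>Well-posedness\<close>

abbreviation "Z2 \<equiv> inZ2 c0 rho0 k l m"
abbreviation "solution t0 A u \<equiv> is_solution U0 c0 rho0 \<omega> k l m t0 A u"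

definition profile_dt :: "(real \<Rightarrow> amp) \<Rightarrow> nat \<Rightarrow> real \<Rightarrow> real \<Rightarrow> real" where
  "profile_dt u i t s = coord i (\<lambda>j. dT u j t (s / k i) 0 0)"

context
  fixes t0 A u
  assumes sol: "solution t0 A u"
begin

lemma solution_zero: "t \<le> 0 \<Longrightarrow> u t = amp_zero"
  using sol unfolding is_solution_def by blast

lemma solution_in_Z2: "t \<in> {0..t0} \<Longrightarrow> Z2 (u t)"
  using sol unfolding is_solution_def by blast

lemma solution_profile_initial: "profile i (u 0) s = 0"
  using solution_zero[of 0] by (simp add: profile_def cmp_amp_zero coord_def)

lemma solution_profile_continuous: "continuous_on ({0..t0} \<times> UNIV) (\<lambda>p. profile i (u (fst p)) (snd p))"
proof -
  have "continuous_on ({0..t0} \<times> UNIV) (\<lambda>p. cmp (u (fst p)) j (snd p / k i) 0 0)" if "j < 4" for j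
    using sol that unfolding is_solution_def by (intro continuous_on_uncurry4_axis[of "{..t0}"]) auto
  then show ?thesis
    unfolding profile_def coord_def by (intro continuous_intros) auto
qed

lemma solution_profile_dt_continuous: "continuous_on ({0<..<t0} \<times> UNIV) (\<lambda>p. profile_dt u i (fst p) (snd p))"
proof -
  have "continuous_on ({0<..<t0} \<times> UNIV) (\<lambda>p. dT u j (fst p) (snd p / k i) 0 0)" if "j < 4" for j
    using sol that unfolding is_solution_def by (intro continuous_on_uncurry4_axis[of "{0<..<t0}"]) auto
  then show ?thesis
    unfolding profile_dt_def coord_def by (intro continuous_intros) auto
qed

lemma solution_profile_has_derivative_t:
  assumes "0 < \<tau>" "\<tau> < t0"
  shows "((\<lambda>\<tau>. profile i (u \<tau>) s) has_real_derivative profile_dt u i \<tau> s) (at \<tau>)"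
proof -
  have "((\<lambda>t. cmp (u t) j (s / k i) 0 0) has_real_derivative dT u j \<tau> (s / k i) 0 0) (at \<tau>)" if "j < 4" for j
    using sol that assms unfolding is_solution_def dT_def by (simp add: DERIV_deriv_iff_real_differentiable)
  then show ?thesis
    unfolding profile_def profile_dt_def coord_def sum_lessThan4
    by (intro DERIV_add DERIV_cmult) auto
qed

lemma solution_profile_has_derivative_s:
  assumes "\<tau> \<in> {0..t0}" "i \<in> {1..4}"
  shows "((\<lambda>s. profile i (u \<tau>) s) has_real_derivative deriv (profile i (u \<tau>)) s) (at s)"
proof -
  obtain f where "\<forall>i\<in>{1..4}. f i C1_differentiable_on UNIV" and "u \<tau> = plane_wave f"
    using solution_in_Z2[OF assms(1)] unfolding inZ2_iff_plane_wave by blast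
  moreover from this(2) assms(2) have "profile i (u \<tau>) = f i"
    by (simp add: fun_eq_iff profile_plane_wave)
  ultimately show ?thesis
    using assms(2) by (simp add: C1_differentiable_on_UNIV_deriv(1))
qed

lemma solution_profile_transport:
  assumes "0 < \<tau>" "\<tau> < t0" "i \<in> {1..4}"
  shows "profile_dt u i \<tau> s + speed i * deriv (profile i (u \<tau>)) s = profile i A s * sin (\<omega> * \<tau>)"
proof -
  obtain f where f: "\<forall>i\<in>{1..4}. f i C1_differentiable_on UNIV" and u\<tau>: "u \<tau> = plane_wave f"
    using solution_in_Z2[of \<tau>] assms unfolding inZ2_iff_plane_wave by auto
  define x0 where "x0 = s / k i"
  define D where "D q = deriv (f q) (\<xi> q x0 0 0)" for q
  have Df: "\<And>q x. q \<in> {1..4} \<Longrightarrow> (f q has_real_derivative deriv (f q) x) (at x)"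
    using f C1_differentiable_on_UNIV_deriv(1) by blast
  have dX: "dX u j \<tau> x0 0 0 = mode_sum (\<lambda>q. k q * D q) j" if "j < 4" for j
    unfolding dX_def D_def u\<tau> by (rule DERIV_imp_deriv[OF plane_wave_has_derivative(1)[OF Df that]])
  have dY: "dY u j \<tau> x0 0 0 = mode_sum (\<lambda>q. l q * D q) j" if "j < 4" for j
    unfolding dY_def D_def u\<tau> by (rule DERIV_imp_deriv[OF plane_wave_has_derivative(2)[OF Df that]])
  have dZ: "dZ u j \<tau> x0 0 0 = mode_sum (\<lambda>q. m q * D q) j" if "j < 4" for j
    unfolding dZ_def D_def u\<tau> by (rule DERIV_imp_deriv[OF plane_wave_has_derivative(3)[OF Df that]])
  have dT: "dT u j \<tau> x0 0 0 = cmp A j x0 0 0 * sin (\<omega> * \<tau>) - mode_sum (\<lambda>q. speed q * D q) j" if "j < 4" for j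
  proof -
    have "\<tau> \<in> {0<..<t0}"
      using assms(1,2) by simp
    note pde = sol[unfolded is_solution_def, THEN conjunct2, THEN conjunct2, THEN conjunct2,
        rule_format, OF this, of x0 0 0]
    show ?thesis
      using that pde acoustic_operator_mode_sum[of D] unfolding less_4_cases by (auto simp: dX dY dZ)
  qed
  have "profile_dt u i \<tau> s = profile i A s * sin (\<omega> * \<tau>) - speed i * D i"
    unfolding profile_dt_def profile_def x0_def[symmetric]
    by (simp add: coord_cong[OF dT] coord_diff coord_scale coord_mode_sum[OF assms(3)])
  moreover have "profile i (u \<tau>) = f i"
    using assms(3) by (simp add: fun_eq_iff u\<tau> profile_plane_wave)
  then have "D i = deriv (profile i (u \<tau>)) s"
    unfolding D_def x0_def using assms(3) by (simp add: xi_def k_nonzero)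
  ultimately show ?thesis
    by simp
qed

end

lemma solution_profile_diff_bound:
  assumes u: "solution t0 A u" and v: "solution t0 B v" and i: "i \<in> {1..4}" and t: "t \<in> {0..t0}"
    and Q: "\<And>s. \<bar>profile i A s - profile i B s\<bar> \<le> Q"
  shows "\<bar>profile i (u t) s - profile i (v t) s\<bar> \<le> Q * t"
proof (rule transport_bound[where h = "\<lambda>\<tau> s. profile i (u \<tau>) s - profile i (v \<tau>) s"
      and Ht = "\<lambda>\<tau> s. profile_dt u i \<tau> s - profile_dt v i \<tau> s"
      and Hs = "\<lambda>\<tau> s. deriv (profile i (u \<tau>)) s - deriv (profile i (v \<tau>)) s" and c = "speed i" and T = t0])
  show "0 \<le> t" "t \<le> t0"
    using t by simp_all
  show "continuous_on ({0..t0} \<times> UNIV) (\<lambda>p. profile i (u (fst p)) (snd p) - profile i (v (fst p)) (snd p))"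
    by (intro continuous_intros solution_profile_continuous[OF u] solution_profile_continuous[OF v])
  show "continuous_on ({0<..<t0} \<times> UNIV) (\<lambda>p. profile_dt u i (fst p) (snd p) - profile_dt v i (fst p) (snd p))"
    by (intro continuous_intros solution_profile_dt_continuous[OF u] solution_profile_dt_continuous[OF v])
  show "profile i (u 0) s - profile i (v 0) s = 0" for s
    by (simp add: solution_profile_initial[OF u] solution_profile_initial[OF v])
  fix \<tau> s
  assume \<tau>: "0 < \<tau>" "\<tau> < t0"
  show "((\<lambda>\<tau>. profile i (u \<tau>) s - profile i (v \<tau>) s) has_real_derivative
      profile_dt u i \<tau> s - profile_dt v i \<tau> s) (at \<tau>)"
    by (intro DERIV_diff solution_profile_has_derivative_t[OF u \<tau>] solution_profile_has_derivative_t[OF v \<tau>])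
  show "((\<lambda>s. profile i (u \<tau>) s - profile i (v \<tau>) s) has_real_derivative
      deriv (profile i (u \<tau>)) s - deriv (profile i (v \<tau>)) s) (at s)"
    using \<tau> i by (intro DERIV_diff solution_profile_has_derivative_s[OF u] solution_profile_has_derivative_s[OF v]) auto
  have "profile_dt u i \<tau> s - profile_dt v i \<tau> s
      + speed i * (deriv (profile i (u \<tau>)) s - deriv (profile i (v \<tau>)) s)
      = (profile i A s - profile i B s) * sin (\<omega> * \<tau>)"
    using solution_profile_transport[OF u \<tau> i, of s] solution_profile_transport[OF v \<tau> i, of s]
    by (simp add: algebra_simps)
  also have "\<bar>\<dots>\<bar> \<le> Q"
    by (rule abs_mult_sin_le[OF Q])
  finally show "\<bar>profile_dt u i \<tau> s - profile_dt v i \<tau> s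
      + speed i * (deriv (profile i (u \<tau>)) s - deriv (profile i (v \<tau>)) s)\<bar> \<le> Q" .
qed

lemma solution_unique:
  assumes u: "solution t0 A u" and v: "solution t0 A v" and "t \<le> t0"
  shows "u t = v t"
proof (cases "t \<le> 0")
  case True
  then show ?thesis
    using solution_zero[OF u] solution_zero[OF v] by simp
next
  case False
  with \<open>t \<le> t0\<close> have t: "t \<in> {0..t0}"
    by simp
  have "profile i (u t) = profile i (v t)" if "i \<in> {1..4}" for i
    using solution_profile_diff_bound[OF u v that t, of 0] by (simp add: fun_eq_iff)
  then show ?thesis
    using solution_in_Z2[OF u t] solution_in_Z2[OF v t] by (rule inZ2_eqI[rotated 2])
qed

lemma bounded3_cmp_amp_minus:
  assumes "Z2 A" "Z2 B" "j < 4"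
  shows "bounded3 (cmp (amp_minus A B) j)"
proof -
  have "bounded3 (cmp A j)" "bounded3 (cmp B j)"
    using assms by (simp_all add: inZ2_bounded3)
  moreover have "cmp (amp_minus A B) j = (\<lambda>x y z. cmp A j x y z - cmp B j x y z)"
    using cmp_amp_minus[OF assms(3)] by (simp add: fun_eq_iff)
  ultimately show ?thesis
    by (simp add: bounded3_diff)
qed

lemma z2norm_solution_diff_le:
  assumes u: "solution t0 A u" and v: "solution t0 B v" and A: "Z2 A" and B: "Z2 B" and t: "t \<in> {0..t0}"
  shows "z2norm (amp_minus (u t) (v t)) \<le> mode_bound * (coord_bound * z2norm (amp_minus A B) * t)"
proof (rule z2norm_le)
  fix j :: nat and x y z :: real
  assume j: "j < 4"
  have "\<bar>profile i (u t) s - profile i (v t) s\<bar> \<le> coord_bound * z2norm (amp_minus A B) * t"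
    if "i \<in> {1..4}" for i s
    using that bounded3_cmp_amp_minus[OF A B] abs_profile_le_z2norm
    by (intro solution_profile_diff_bound[OF u v that t]) (simp add: profile_amp_minus[symmetric])
  then have "\<bar>mode_sum (\<lambda>i. profile i (u t) (\<xi> i x y z) - profile i (v t) (\<xi> i x y z)) j\<bar>
      \<le> mode_bound * (coord_bound * z2norm (amp_minus A B) * t)"
    by (intro abs_mode_sum_le[OF j])
  then show "\<bar>cmp (amp_minus (u t) (v t)) j x y z\<bar> \<le> mode_bound * (coord_bound * z2norm (amp_minus A B) * t)"
    by (simp add: cmp_amp_minus j cmp_eq_mode_sum_profile[OF solution_in_Z2[OF u t] j]
        cmp_eq_mode_sum_profile[OF solution_in_Z2[OF v t] j] mode_sum_diff)
qed

lemma solution_continuous_dependence: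
  assumes As: "\<And>n. Z2 (As n)" and A: "Z2 A" and lim: "(\<lambda>n. z2norm (amp_minus (As n) A)) \<longlonglongrightarrow> 0"
    and us: "\<And>n. solution t0 (As n) (us n)" and u: "solution t0 A u" and t: "t \<in> {0..t0}"
  shows "(\<lambda>n. z2norm (amp_minus (us n t) (u t))) \<longlonglongrightarrow> 0"
proof (rule tendsto_sandwich[of "\<lambda>n. 0" _ _ "\<lambda>n. mode_bound * (coord_bound * z2norm (amp_minus (As n) A) * t)"])
  show "\<forall>\<^sub>F n in sequentially. 0 \<le> z2norm (amp_minus (us n t) (u t))"
    using bounded3_cmp_amp_minus[OF solution_in_Z2[OF us t] solution_in_Z2[OF u t]]
    by (simp add: z2norm_nonneg)
  show "\<forall>\<^sub>F n in sequentially. z2norm (amp_minus (us n t) (u t))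
      \<le> mode_bound * (coord_bound * z2norm (amp_minus (As n) A) * t)"
    using z2norm_solution_diff_le[OF us u As A t] by simp
  show "(\<lambda>n. mode_bound * (coord_bound * z2norm (amp_minus (As n) A) * t)) \<longlonglongrightarrow> 0"
    using lim by (auto intro!: tendsto_eq_intros)
qed simp

lemma continuous_on_mode_sum_uncurry4:
  assumes "\<And>i. i \<in> {1..4} \<Longrightarrow> continuous_on UNIV (\<lambda>p. H i (fst p) (snd p))" and "continuous_on S \<tau>"
  shows "continuous_on (S \<times> UNIV) (uncurry4 (\<lambda>t x y z. mode_sum (\<lambda>i. H i (\<tau> t) (\<xi> i x y z)) j))"
proof -
  have "continuous_on (S \<times> UNIV) (\<lambda>p. H i (\<tau> (fst p)) (\<xi> i (fst (snd p)) (fst (snd (snd p))) (snd (snd (snd p)))))"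
    if "i \<in> {1..4}" for i
  proof -
    have "continuous_on (S \<times> UNIV) (\<lambda>p. \<tau> (fst p))"
      using continuous_on_compose2[OF assms(2) continuous_on_fst[OF continuous_on_id]] by force
    then have "continuous_on (S \<times> UNIV)
        (\<lambda>p. (\<tau> (fst p), \<xi> i (fst (snd p)) (fst (snd (snd p))) (snd (snd (snd p)))))"
      unfolding xi_def by (intro continuous_intros)
    from continuous_on_compose2[OF assms(1)[OF that] this] show ?thesis
      by simp
  qed
  then show ?thesis
    unfolding uncurry4_def mode_sum_def by (intro continuous_intros) auto
qed

context
  fixes f :: "nat \<Rightarrow> real \<Rightarrow> real" and G Gs :: "nat \<Rightarrow> real \<Rightarrow> real \<Rightarrow> real" and B :: "real \<Rightarrow> real"
  assumes f_cont: "\<And>i. i \<in> {1..4} \<Longrightarrow> continuous_on UNIV (f i)"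
    and G_initial: "\<And>i s. i \<in> {1..4} \<Longrightarrow> G i 0 s = 0"
    and G_dt: "\<And>i t s. i \<in> {1..4} \<Longrightarrow>
      ((\<lambda>t. G i t s) has_real_derivative f i s * sin (\<omega> * t) - speed i * Gs i t s) (at t)"
    and G_ds: "\<And>i t s. i \<in> {1..4} \<Longrightarrow> ((\<lambda>s. G i t s) has_real_derivative Gs i t s) (at s)"
    and G_cont: "\<And>i. i \<in> {1..4} \<Longrightarrow> continuous_on UNIV (\<lambda>p. G i (fst p) (snd p))"
    and Gs_cont: "\<And>i. i \<in> {1..4} \<Longrightarrow> continuous_on UNIV (\<lambda>p. Gs i (fst p) (snd p))"
    and G_bound: "\<And>i t s. i \<in> {1..4} \<Longrightarrow> 0 \<le> t \<Longrightarrow> \<bar>G i t s\<bar> \<le> B t"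
begin

text \<open>Freezing the fields at time \<open>0\<close> for \<open>t < 0\<close> makes the wave vanish there, as required of a solution.\<close>
abbreviation "forced_wave t \<equiv> plane_wave (\<lambda>i. G i (max t 0))"

lemma forced_wave_dX: "j < 4 \<Longrightarrow>
    ((\<lambda>x. cmp (forced_wave t) j x y z) has_real_derivative mode_sum (\<lambda>i. k i * Gs i (max t 0) (\<xi> i x y z)) j) (at x)"
  and forced_wave_dY: "j < 4 \<Longrightarrow>
    ((\<lambda>y. cmp (forced_wave t) j x y z) has_real_derivative mode_sum (\<lambda>i. l i * Gs i (max t 0) (\<xi> i x y z)) j) (at y)"
  and forced_wave_dZ: "j < 4 \<Longrightarrow>
    ((\<lambda>z. cmp (forced_wave t) j x y z) has_real_derivative mode_sum (\<lambda>i. m i * Gs i (max t 0) (\<xi> i x y z)) j) (at z)"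
  by (rule plane_wave_has_derivative[OF G_ds]; assumption)+

lemma forced_wave_dT:
  assumes "0 < t" "j < 4"
  shows "((\<lambda>t. cmp (forced_wave t) j x y z) has_real_derivative
     mode_sum (\<lambda>i. f i (\<xi> i x y z) * sin (\<omega> * t) - speed i * Gs i t (\<xi> i x y z)) j) (at t)"
proof -
  have "((\<lambda>t. mode_sum (\<lambda>i. G i t (\<xi> i x y z)) j) has_real_derivative
      mode_sum (\<lambda>i. f i (\<xi> i x y z) * sin (\<omega> * t) - speed i * Gs i t (\<xi> i x y z)) j) (at t)"
    unfolding mode_sum_def sum_atLeast1_atMost4 by (intro DERIV_add DERIV_cmult G_dt) auto
  then show ?thesis
    by (rule has_field_derivative_transform_within_open[of _ _ _ "{0<..}"])
      (use assms in \<open>auto simp: cmp_plane_wave\<close>)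
qed

lemma forced_wave_partials:
  assumes "j < 4"
  shows "dX forced_wave j t x y z = mode_sum (\<lambda>i. k i * Gs i (max t 0) (\<xi> i x y z)) j"
    and "dY forced_wave j t x y z = mode_sum (\<lambda>i. l i * Gs i (max t 0) (\<xi> i x y z)) j"
    and "dZ forced_wave j t x y z = mode_sum (\<lambda>i. m i * Gs i (max t 0) (\<xi> i x y z)) j"
    and "0 < t \<Longrightarrow>
      dT forced_wave j t x y z = mode_sum (\<lambda>i. f i (\<xi> i x y z) * sin (\<omega> * t) - speed i * Gs i t (\<xi> i x y z)) j"
  unfolding dX_def dY_def dZ_def dT_def
  by (rule DERIV_imp_deriv forced_wave_dX[OF assms] forced_wave_dY[OF assms] forced_wave_dZ[OF assms]
      forced_wave_dT[OF _ assms] | assumption)+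

lemma forced_wave_in_Z2: "Z2 (forced_wave t)"
  unfolding inZ2_iff_plane_wave
proof (intro conjI exI allI impI ballI)
  fix i :: nat
  assume i: "i \<in> {1..4}"
  have "continuous_on UNIV (\<lambda>s. Gs i (fst (max t 0, s)) (snd (max t 0, s)))"
    by (rule continuous_on_compose2[OF Gs_cont[OF i]]) (auto intro: continuous_intros)
  then show "G i (max t 0) C1_differentiable_on UNIV"
    unfolding C1_differentiable_on_def has_real_derivative_iff_has_vector_derivative[symmetric]
    using G_ds[OF i] by auto
next
  show "bounded3 (cmp (forced_wave t) j)" if "j < 4" for j
    using G_bound by (intro bounded3_plane_wave[OF _ that, of _ "B (max t 0)"]) simp
qed (rule refl)

lemma forced_wave_continuous:
  assumes "j < 4"
  shows "continuous_on ({..t0} \<times> UNIV) (uncurry4 (\<lambda>t. cmp (forced_wave t) j))"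
    and "continuous_on ({0<..<t0} \<times> UNIV) (uncurry4 (dX forced_wave j))"
    and "continuous_on ({0<..<t0} \<times> UNIV) (uncurry4 (dY forced_wave j))"
    and "continuous_on ({0<..<t0} \<times> UNIV) (uncurry4 (dZ forced_wave j))"
    and "continuous_on ({0<..<t0} \<times> UNIV) (uncurry4 (dT forced_wave j))"
proof -
  have cmp_eq: "(\<lambda>t. cmp (forced_wave t) j) = (\<lambda>t x y z. mode_sum (\<lambda>i. G i (max t 0) (\<xi> i x y z)) j)"
    by (simp add: fun_eq_iff cmp_plane_wave[OF assms])
  show "continuous_on ({..t0} \<times> UNIV) (uncurry4 (\<lambda>t. cmp (forced_wave t) j))"
    unfolding cmp_eq by (rule continuous_on_mode_sum_uncurry4[where H = G]) (auto intro: G_cont continuous_intros)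
  have dX_eq: "dX forced_wave j = (\<lambda>t x y z. mode_sum (\<lambda>i. k i * Gs i (max t 0) (\<xi> i x y z)) j)"
    and dY_eq: "dY forced_wave j = (\<lambda>t x y z. mode_sum (\<lambda>i. l i * Gs i (max t 0) (\<xi> i x y z)) j)"
    and dZ_eq: "dZ forced_wave j = (\<lambda>t x y z. mode_sum (\<lambda>i. m i * Gs i (max t 0) (\<xi> i x y z)) j)"
    by (simp_all add: fun_eq_iff forced_wave_partials[OF assms])
  show "continuous_on ({0<..<t0} \<times> UNIV) (uncurry4 (dX forced_wave j))"
    unfolding dX_eq by (rule continuous_on_mode_sum_uncurry4[where H = "\<lambda>i t s. k i * Gs i t s"])
      (auto intro!: continuous_intros Gs_cont)
  show "continuous_on ({0<..<t0} \<times> UNIV) (uncurry4 (dY forced_wave j))"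
    unfolding dY_eq by (rule continuous_on_mode_sum_uncurry4[where H = "\<lambda>i t s. l i * Gs i t s"])
      (auto intro!: continuous_intros Gs_cont)
  show "continuous_on ({0<..<t0} \<times> UNIV) (uncurry4 (dZ forced_wave j))"
    unfolding dZ_eq by (rule continuous_on_mode_sum_uncurry4[where H = "\<lambda>i t s. m i * Gs i t s"])
      (auto intro!: continuous_intros Gs_cont)
  have "continuous_on ({0<..<t0} \<times> UNIV) (uncurry4 (\<lambda>t x y z.
      mode_sum (\<lambda>i. f i (\<xi> i x y z) * sin (\<omega> * t) - speed i * Gs i t (\<xi> i x y z)) j))"
  proof (rule continuous_on_mode_sum_uncurry4[where H = "\<lambda>i t s. f i s * sin (\<omega> * t) - speed i * Gs i t s"])
    fix i :: nat
    assume i: "i \<in> {1..4}"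
    have "continuous_on UNIV (\<lambda>p. f i (snd p))"
      by (rule continuous_on_compose2[OF f_cont[OF i]]) (auto intro: continuous_intros)
    then show "continuous_on UNIV (\<lambda>p. f i (snd p) * sin (\<omega> * fst p) - speed i * Gs i (fst p) (snd p))"
      by (intro continuous_intros Gs_cont[OF i])
  qed (rule continuous_on_id)
  then show "continuous_on ({0<..<t0} \<times> UNIV) (uncurry4 (dT forced_wave j))"
    by (rule continuous_on_eq) (auto simp: uncurry4_def forced_wave_partials(4)[OF assms])
qed

lemma forced_wave_pde:
  assumes "0 < t"
  shows "dT forced_wave 0 t x y z + U0 * dX forced_wave 0 t x y z + 1 / rho0 * dX forced_wave 3 t x y z
      = cmp (plane_wave f) 0 x y z * sin (\<omega> * t)"
    and "dT forced_wave 1 t x y z + U0 * dX forced_wave 1 t x y z + 1 / rho0 * dY forced_wave 3 t x y z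
      = cmp (plane_wave f) 1 x y z * sin (\<omega> * t)"
    and "dT forced_wave 2 t x y z + U0 * dX forced_wave 2 t x y z + 1 / rho0 * dZ forced_wave 3 t x y z
      = cmp (plane_wave f) 2 x y z * sin (\<omega> * t)"
    and "dT forced_wave 3 t x y z + U0 * dX forced_wave 3 t x y z
      + rho0 * c0\<^sup>2 * (dX forced_wave 0 t x y z + dY forced_wave 1 t x y z + dZ forced_wave 2 t x y z)
      = cmp (plane_wave f) 3 x y z * sin (\<omega> * t)"
proof -
  define D where "D i = Gs i t (\<xi> i x y z)" for i
  have "max t 0 = t"
    using assms by simp
  then have X: "dX forced_wave j t x y z = mode_sum (\<lambda>i. k i * D i) j"
    and Y: "dY forced_wave j t x y z = mode_sum (\<lambda>i. l i * D i) j"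
    and Z: "dZ forced_wave j t x y z = mode_sum (\<lambda>i. m i * D i) j"
    and T: "dT forced_wave j t x y z = cmp (plane_wave f) j x y z * sin (\<omega> * t) - mode_sum (\<lambda>i. speed i * D i) j"
    if "j < 4" for j
    using assms
    by (simp_all add: forced_wave_partials[OF that] D_def cmp_plane_wave[OF that] mode_sum_diff mode_sum_scale)
  then show "dT forced_wave 0 t x y z + U0 * dX forced_wave 0 t x y z + 1 / rho0 * dX forced_wave 3 t x y z
      = cmp (plane_wave f) 0 x y z * sin (\<omega> * t)"
    and "dT forced_wave 1 t x y z + U0 * dX forced_wave 1 t x y z + 1 / rho0 * dY forced_wave 3 t x y z
      = cmp (plane_wave f) 1 x y z * sin (\<omega> * t)"
    and "dT forced_wave 2 t x y z + U0 * dX forced_wave 2 t x y z + 1 / rho0 * dZ forced_wave 3 t x y z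
      = cmp (plane_wave f) 2 x y z * sin (\<omega> * t)"
    and "dT forced_wave 3 t x y z + U0 * dX forced_wave 3 t x y z
      + rho0 * c0\<^sup>2 * (dX forced_wave 0 t x y z + dY forced_wave 1 t x y z + dZ forced_wave 2 t x y z)
      = cmp (plane_wave f) 3 x y z * sin (\<omega> * t)"
    using acoustic_operator_mode_sum[of D] by simp_all
qed

lemma forced_wave_solution: "solution t0 (plane_wave f) forced_wave"
  unfolding is_solution_def
proof (intro conjI allI impI ballI)
  show "forced_wave t = amp_zero" if "t \<le> 0" for t
  proof -
    have "forced_wave t = plane_wave (\<lambda>i s. 0)"
      using that by (intro plane_wave_cong) (simp add: G_initial fun_eq_iff)
    then show ?thesis
      by (simp add: plane_wave_zero)
  qed
  show "Z2 (forced_wave t)" for t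
    by (rule forced_wave_in_Z2)
  fix j :: nat
  assume j: "j < 4"
  show "continuous_on ({..t0} \<times> UNIV) (uncurry4 (\<lambda>t. cmp (forced_wave t) j))"
    "continuous_on ({0<..<t0} \<times> UNIV) (uncurry4 (dX forced_wave j))"
    "continuous_on ({0<..<t0} \<times> UNIV) (uncurry4 (dY forced_wave j))"
    "continuous_on ({0<..<t0} \<times> UNIV) (uncurry4 (dZ forced_wave j))"
    "continuous_on ({0<..<t0} \<times> UNIV) (uncurry4 (dT forced_wave j))"
    by (rule forced_wave_continuous[OF j])+
  fix t x y z :: real
  show "(\<lambda>x. cmp (forced_wave t) j x y z) differentiable (at x)"
    "(\<lambda>y. cmp (forced_wave t) j x y z) differentiable (at y)"
    "(\<lambda>z. cmp (forced_wave t) j x y z) differentiable (at z)"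
    unfolding real_differentiable_def
    by (rule exI, rule forced_wave_dX[OF j] forced_wave_dY[OF j] forced_wave_dZ[OF j])+
  assume "t \<in> {0<..<t0}"
  then have "0 < t"
    by simp
  from forced_wave_dT[OF this j] show "(\<lambda>t. cmp (forced_wave t) j x y z) differentiable (at t)"
    unfolding real_differentiable_def by blast
next
  fix t x y z :: real
  assume "t \<in> {0<..<t0}"
  then have "0 < t"
    by simp
  from forced_wave_pde[OF this] show "dT forced_wave 0 t x y z + U0 * dX forced_wave 0 t x y z + 1 / rho0 * dX forced_wave 3 t x y z
      = cmp (plane_wave f) 0 x y z * sin (\<omega> * t)"
    "dT forced_wave 1 t x y z + U0 * dX forced_wave 1 t x y z + 1 / rho0 * dY forced_wave 3 t x y z
      = cmp (plane_wave f) 1 x y z * sin (\<omega> * t)"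
    "dT forced_wave 2 t x y z + U0 * dX forced_wave 2 t x y z + 1 / rho0 * dZ forced_wave 3 t x y z
      = cmp (plane_wave f) 2 x y z * sin (\<omega> * t)"
    "dT forced_wave 3 t x y z + U0 * dX forced_wave 3 t x y z
      + rho0 * c0\<^sup>2 * (dX forced_wave 0 t x y z + dY forced_wave 1 t x y z + dZ forced_wave 2 t x y z)
      = cmp (plane_wave f) 3 x y z * sin (\<omega> * t)"
    by simp_all
qed
end

lemma solution_exists:
  assumes "Z2 A"
  shows "\<exists>u. solution t0 A u"
proof -
  obtain f where f: "\<forall>i\<in>{1..4}. f i C1_differentiable_on UNIV" and A: "A = plane_wave f"
    using assms unfolding inZ2_iff_plane_wave by blast
  have f_bound: "\<bar>f i s\<bar> \<le> coord_bound * z2norm A" if "i \<in> {1..4}" for i s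
    using abs_profile_le_z2norm[OF inZ2_bounded3[OF assms] that, of s] that
    by (simp add: A profile_plane_wave)
  define G where "G i = forced_transport \<omega> (speed i) (f i)" for i
  define Gs where "Gs i = forced_transport_ds \<omega> (speed i) (f i)" for i
  have "solution t0 (plane_wave f) (\<lambda>t. plane_wave (\<lambda>i. G i (max t 0)))"
  proof (rule forced_wave_solution[where Gs = Gs and B = "\<lambda>t. coord_bound * z2norm A * t"])
    fix i :: nat
    assume i: "i \<in> {1..4}"
    then have \<omega>: "\<omega> \<noteq> 0" and fi: "f i C1_differentiable_on UNIV"
      using \<omega>_nonzero f by auto
    show "continuous_on UNIV (f i)"
      using fi by (intro differentiable_imp_continuous_on C1_diff_imp_diff)
    show "G i 0 s = 0" for s
      unfolding G_def by (rule forced_transport_initial[OF \<omega> fi])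
    show "((\<lambda>t. G i t s) has_real_derivative f i s * sin (\<omega> * t) - speed i * Gs i t s) (at t)" for t s
      unfolding G_def Gs_def by (rule forced_transport_has_derivative_t[OF \<omega> fi])
    show "((\<lambda>s. G i t s) has_real_derivative Gs i t s) (at s)" for t s
      unfolding G_def Gs_def by (rule forced_transport_has_derivative_s[OF \<omega> fi])
    show "continuous_on UNIV (\<lambda>p. G i (fst p) (snd p))"
      unfolding G_def by (rule continuous_on_forced_transport[OF \<omega> fi])
    show "continuous_on UNIV (\<lambda>p. Gs i (fst p) (snd p))"
      unfolding Gs_def by (rule continuous_on_forced_transport_ds[OF \<omega> fi])
    show "\<bar>G i t s\<bar> \<le> coord_bound * z2norm A * t" if "0 \<le> t" for t s
      unfolding G_def using f_bound[OF i] that by (rule forced_transport_bound[OF \<omega> fi])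
  qed
  then show ?thesis
    unfolding A by blast
qed

lemma well_posed: "well_posed U0 c0 rho0 \<omega> k l m t0"
  unfolding well_posed_def
  using solution_exists solution_unique solution_continuous_dependence by blast

section \<open>Resonance and instability\<close>

lemma speed3_nonzero: "speed 3 \<noteq> 0"
  using U0_pos k_nonzero[of 3] by (simp add: speed_def)

text \<open>Forcing \<open>sin (\<omega> s / speed 3)\<close> of the third wave family is transported exactly at the resonant
  frequency, so its response grows linearly in time along the characteristic \<open>s = speed 3 * t\<close>.\<close>
definition resonant_profile :: "real \<Rightarrow> real \<Rightarrow> real \<Rightarrow> real" where
  "resonant_profile a t s = a * ((t / 2) * cos (\<omega> / speed 3 * s - \<omega> * t)
     - sin (\<omega> / speed 3 * s + \<omega> * t) / (4 * \<omega>) + sin (\<omega> / speed 3 * s - \<omega> * t) / (4 * \<omega>))"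

definition resonant_profile_ds :: "real \<Rightarrow> real \<Rightarrow> real \<Rightarrow> real" where
  "resonant_profile_ds a t s = a * \<omega> / speed 3 * (- (t / 2) * sin (\<omega> / speed 3 * s - \<omega> * t)
     - cos (\<omega> / speed 3 * s + \<omega> * t) / (4 * \<omega>) + cos (\<omega> / speed 3 * s - \<omega> * t) / (4 * \<omega>))"

lemma resonant_profile_has_derivative_t:
  "((\<lambda>t. resonant_profile a t s) has_real_derivative
     a * sin (\<omega> / speed 3 * s) * sin (\<omega> * t) - speed 3 * resonant_profile_ds a t s) (at t)"
proof -
  have "((\<lambda>t. resonant_profile a t s) has_real_derivative
      a * (cos (\<omega> / speed 3 * s - \<omega> * t) - cos (\<omega> / speed 3 * s + \<omega> * t)) / 4
      + a * (t / 2) * \<omega> * sin (\<omega> / speed 3 * s - \<omega> * t)) (at t)"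
    unfolding resonant_profile_def using \<omega>_nonzero
    by (auto intro!: derivative_eq_intros simp: field_simps)
  moreover have "a * (cos (\<omega> / speed 3 * s - \<omega> * t) - cos (\<omega> / speed 3 * s + \<omega> * t)) / 4
      + a * (t / 2) * \<omega> * sin (\<omega> / speed 3 * s - \<omega> * t)
      = a * sin (\<omega> / speed 3 * s) * sin (\<omega> * t) - speed 3 * resonant_profile_ds a t s"
    unfolding resonant_profile_ds_def cos_diff cos_add using \<omega>_nonzero speed3_nonzero
    by (simp add: field_simps)
  ultimately show ?thesis
    by simp
qed

lemma resonant_profile_has_derivative_s:
  "((\<lambda>s. resonant_profile a t s) has_real_derivative resonant_profile_ds a t s) (at s)"
  unfolding resonant_profile_def resonant_profile_ds_def using \<omega>_nonzero speed3_nonzero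
  by (auto intro!: derivative_eq_intros simp: field_simps)

lemma continuous_on_resonant_profile:
  "continuous_on UNIV (\<lambda>p. resonant_profile a (fst p) (snd p))"
  "continuous_on UNIV (\<lambda>p. resonant_profile_ds a (fst p) (snd p))"
  unfolding resonant_profile_def resonant_profile_ds_def
  by (intro continuous_intros; use speed3_nonzero \<omega>_nonzero in simp)+

lemma abs_resonant_profile_le:
  assumes "0 \<le> t"
  shows "\<bar>resonant_profile a t s\<bar> \<le> \<bar>a\<bar> * (t / 2 + 1 / (2 * \<bar>\<omega>\<bar>))"
proof -
  define X Y Z where "X = (t / 2) * cos (\<omega> / speed 3 * s - \<omega> * t)"
    and "Y = sin (\<omega> / speed 3 * s + \<omega> * t) / (4 * \<omega>)" and "Z = sin (\<omega> / speed 3 * s - \<omega> * t) / (4 * \<omega>)"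
  have "\<bar>X\<bar> \<le> t / 2" "\<bar>Y\<bar> \<le> 1 / (4 * \<bar>\<omega>\<bar>)" "\<bar>Z\<bar> \<le> 1 / (4 * \<bar>\<omega>\<bar>)"
    unfolding X_def Y_def Z_def using assms \<omega>_nonzero
    by (simp_all add: abs_mult abs_divide mult_left_le divide_right_mono)
  then have "\<bar>X - Y + Z\<bar> \<le> t / 2 + 1 / (2 * \<bar>\<omega>\<bar>)"
    using abs_triangle_ineq[of "X - Y" Z] abs_triangle_ineq4[of X Y] by simp
  then show ?thesis
    unfolding resonant_profile_def X_def Y_def Z_def abs_mult by (simp add: mult_left_mono)
qed

lemma resonant_profile_on_characteristic:
  "resonant_profile a t (speed 3 * t) = a * (t / 2 - sin (2 * \<omega> * t) / (4 * \<omega>))"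
  unfolding resonant_profile_def using speed3_nonzero by (simp add: algebra_simps mult_2)

definition resonant_forcing :: "real \<Rightarrow> nat \<Rightarrow> real \<Rightarrow> real" where
  "resonant_forcing a i s = (if i = 3 then a * sin (\<omega> / speed 3 * s) else 0)"

definition resonant_field :: "real \<Rightarrow> nat \<Rightarrow> real \<Rightarrow> real \<Rightarrow> real" where
  "resonant_field a i = (if i = 3 then resonant_profile a else (\<lambda>t s. 0))"

definition resonant_wave :: "real \<Rightarrow> real \<Rightarrow> amp" where
  "resonant_wave a t = plane_wave (\<lambda>i. resonant_field a i (max t 0))"

lemma resonant_wave_solution: "solution t0 (plane_wave (resonant_forcing a)) (resonant_wave a)"
  unfolding resonant_wave_def
proof (rule forced_wave_solution[where Gs = "\<lambda>i. if i = 3 then resonant_profile_ds a else (\<lambda>t s. 0)"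
      and B = "\<lambda>t. \<bar>a\<bar> * (t / 2 + 1 / (2 * \<bar>\<omega>\<bar>))"])
  fix i :: nat
  show "continuous_on UNIV (resonant_forcing a i)"
    unfolding resonant_forcing_def using speed3_nonzero
    by (cases "i = 3") (auto intro!: continuous_intros)
  show "resonant_field a i 0 s = 0" for s
    by (simp add: resonant_field_def resonant_profile_def)
  show "((\<lambda>t. resonant_field a i t s) has_real_derivative
      resonant_forcing a i s * sin (\<omega> * t) - speed i * (if i = 3 then resonant_profile_ds a else (\<lambda>t s. 0)) t s) (at t)"
    for t s
    using resonant_profile_has_derivative_t by (simp add: resonant_field_def resonant_forcing_def)
  show "((\<lambda>s. resonant_field a i t s) has_real_derivative
      (if i = 3 then resonant_profile_ds a else (\<lambda>t s. 0)) t s) (at s)" for t s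
    using resonant_profile_has_derivative_s by (simp add: resonant_field_def)
  show "continuous_on UNIV (\<lambda>p. resonant_field a i (fst p) (snd p))"
    "continuous_on UNIV (\<lambda>p. (if i = 3 then resonant_profile_ds a else (\<lambda>t s. 0)) (fst p) (snd p))"
    using continuous_on_resonant_profile by (simp_all add: resonant_field_def)
  show "\<bar>resonant_field a i t s\<bar> \<le> \<bar>a\<bar> * (t / 2 + 1 / (2 * \<bar>\<omega>\<bar>))" if "0 \<le> t" for t s
    using abs_resonant_profile_le[OF that] that by (simp add: resonant_field_def)
qed

lemma resonant_forcing_in_Z2: "Z2 (plane_wave (resonant_forcing a))"
  unfolding inZ2_iff_plane_wave
proof (intro conjI exI ballI allI impI)
  fix i :: nat
  show "resonant_forcing a i C1_differentiable_on UNIV"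
  proof (cases "i = 3")
    case True
    have "((\<lambda>s. a * sin (\<omega> / speed 3 * s)) has_vector_derivative a * cos (\<omega> / speed 3 * s) * (\<omega> / speed 3)) (at s)"
      for s
      unfolding has_real_derivative_iff_has_vector_derivative[symmetric] using speed3_nonzero
      by (auto intro!: derivative_eq_intros)
    moreover have "continuous_on UNIV (\<lambda>s. a * cos (\<omega> / speed 3 * s) * (\<omega> / speed 3))"
      by (intro continuous_intros)
    ultimately have "(\<lambda>s. a * sin (\<omega> / speed 3 * s)) C1_differentiable_on UNIV"
      unfolding C1_differentiable_on_def
      by (intro exI[where x = "\<lambda>s. a * cos (\<omega> / speed 3 * s) * (\<omega> / speed 3)"]) auto
    then show ?thesis
      unfolding resonant_forcing_def using True by simp
  next
    case False
    then show ?thesis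
      unfolding resonant_forcing_def by simp
  qed
next
  show "bounded3 (cmp (plane_wave (resonant_forcing a)) j)" if "j < 4" for j
    by (rule bounded3_plane_wave[OF _ that, of _ "\<bar>a\<bar>"]) (simp add: resonant_forcing_def abs_mult mult_left_le)
qed (rule refl)

lemma z2norm_resonant_forcing: "z2norm (plane_wave (resonant_forcing a)) \<le> mode_bound * \<bar>a\<bar>"
proof (rule z2norm_le)
  fix j :: nat and x y z :: real
  assume "j < 4"
  then show "\<bar>cmp (plane_wave (resonant_forcing a)) j x y z\<bar> \<le> mode_bound * \<bar>a\<bar>"
    unfolding cmp_plane_wave[OF \<open>j < 4\<close>]
    by (rule abs_mode_sum_le) (simp add: resonant_forcing_def abs_mult mult_left_le)
qed

lemma resonant_wave_growth:
  assumes "0 \<le> a" and "0 \<le> T"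
  shows "a * (T / 2 - 1 / (4 * \<bar>\<omega>\<bar>)) \<le> profile 3 (resonant_wave a T) (speed 3 * T)"
proof -
  have "\<bar>sin (2 * \<omega> * T) / (4 * \<omega>)\<bar> \<le> 1 / (4 * \<bar>\<omega>\<bar>)"
    using \<omega>_nonzero by (simp add: abs_divide abs_mult divide_right_mono)
  then have "a * (T / 2 - 1 / (4 * \<bar>\<omega>\<bar>)) \<le> a * (T / 2 - sin (2 * \<omega> * T) / (4 * \<omega>))"
    using assms(1) by (intro mult_left_mono) linarith+
  also have "\<dots> = profile 3 (resonant_wave a T) (speed 3 * T)"
    using assms(2)
    by (simp add: resonant_wave_def resonant_field_def profile_plane_wave resonant_profile_on_characteristic)
  finally show ?thesis .
qed

lemma not_null_stable: "\<not> null_stable U0 c0 rho0 \<omega> k l m"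
proof
  assume "null_stable U0 c0 rho0 \<omega> k l m"
  then obtain \<eta> where "\<eta> > 0" and stable: "\<forall>A. Z2 A \<longrightarrow> z2norm A < \<eta> \<longrightarrow>
      (\<forall>t0>0. \<forall>u. solution t0 A u \<longrightarrow> (\<forall>t\<in>{0..t0}. z2norm (u t) < 1))"
    unfolding null_stable_def by (meson zero_less_one)
  define a where "a = \<eta> / (2 * (mode_bound + 1))"
  have "0 < a"
    unfolding a_def using \<open>\<eta> > 0\<close> mode_bound_nonneg by simp
  have "mode_bound * a < (mode_bound + 1) * a"
    using \<open>0 < a\<close> by simp
  also have "\<dots> = \<eta> / 2"
    unfolding a_def using mode_bound_nonneg by (simp add: field_simps add_pos_nonneg)
  finally have small: "z2norm (plane_wave (resonant_forcing a)) < \<eta>"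
    using z2norm_resonant_forcing[of a] \<open>0 < a\<close> \<open>\<eta> > 0\<close> by simp
  define T where "T = 2 * ((coord_bound + 1) / a + 1 / (4 * \<bar>\<omega>\<bar>)) + 1"
  have "0 < (coord_bound + 1) / a" "0 \<le> 1 / (4 * \<bar>\<omega>\<bar>)"
    using coord_bound_nonneg \<open>0 < a\<close> by simp_all
  then have "T > 0"
    unfolding T_def by (intro add_pos_pos mult_pos_pos add_pos_nonneg) auto
  then have T: "T \<in> {0..T}"
    by simp
  have sol: "solution T (plane_wave (resonant_forcing a)) (resonant_wave a)"
    by (rule resonant_wave_solution)
  have "z2norm (resonant_wave a T) < 1"
    using stable resonant_forcing_in_Z2 small \<open>T > 0\<close> sol T by blast
  then have "coord_bound * z2norm (resonant_wave a T) \<le> coord_bound"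
    using coord_bound_nonneg by (simp add: mult_left_le)
  moreover have "\<bar>profile 3 (resonant_wave a T) (speed 3 * T)\<bar> \<le> coord_bound * z2norm (resonant_wave a T)"
    using inZ2_bounded3[OF solution_in_Z2[OF sol T]] by (rule abs_profile_le_z2norm) auto
  moreover have "a * (T / 2 - 1 / (4 * \<bar>\<omega>\<bar>)) = coord_bound + 1 + a / 2"
    unfolding T_def using \<open>0 < a\<close> by (simp add: field_simps)
  ultimately show False
    using resonant_wave_growth[of a T] \<open>0 < a\<close> \<open>T > 0\<close> by linarith
qed
end

theorem proposition23:
  fixes U0 c0 rho0 \<omega> :: real and k l m :: "nat \<Rightarrow> real"
  assumes "U0 > 0" and "c0 > 0" and "rho0 > 0"
    and "\<omega> \<noteq> 0"
    and "k 1 * k 2 * k 3 * k 4 \<noteq> 0"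
    and "Delta c0 rho0 k l m \<noteq> 0"
  shows "(\<forall>t0>0. well_posed U0 c0 rho0 \<omega> k l m t0) \<and> \<not> null_stable U0 c0 rho0 \<omega> k l m"
proof -
  interpret z2_problem U0 c0 rho0 \<omega> k l m
    using assms by unfold_locales
  show ?thesis
    using well_posed not_null_stable by blast
qed

end
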